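(* Let $\bm v_1,\dots,\bm v_N \in \mathbb{R}^r$ form an equiangular tight frame and let $\bm X := \mathsf{Gram}(\bm v_1,\dots,\bm v_N)$. Then $\bm X \in \mathscr{E}_4^N$ if and only if $N < \frac{r(r+1)}{2}$ or $r = 1$. If $r=1$, then $\bm X = \bm x\bm x^\top$ for some $\bm x \in\{\pm1\}^N$, and $\bm Y = (\bm x\otimes\bm x)(\bm x\otimes\bm x)^\top$ is a degree 4 pseudomoment matrix extending $\bm X$. If $r>1$ and $N < \frac{r(r+1)}{2}$, then a degree 4 pseudomoment matrix extending $\bm X$ is $$\bm Y = \mathrm{vec}(\bm X)\mathrm{vec}(\bm X)^\top + \frac{N^2(1-\frac1r)}{\frac{r(r+1)}{2} - N}\, \bm P,$$ where $\bm P$ is the orthogonal projection matrix of $\mathbb{R}^{N^2}$ onto $\mathrm{vec}(\mathsf{pert}_{\mathscr{E}_2^N}(\bm X))$; equivalently, entrywise, $$Y_{(ij)(k\ell)} = \frac{\frac{r(r-1)}{2}}{\frac{r(r+1)}{2}-N}\big(X_{ij}X_{k\ell} + X_{ik}X_{j\ell} + X_{i\ell}X_{jk}\big) - \frac{r^2(1-\frac1N)}{\frac{r(r+1)}{2}-N}\sum_{m=1}^N X_{im}X_{jm}X_{km}X_{\ell m}.$$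
   Context: Unit vectors $\bm v_1,\dots,\bm v_N\in\mathbb{R}^r$ form a unit norm tight frame (UNTF) if $\sum_i \bm v_i\bm v_i^\top = \frac{N}{r}\bm I_r$; they form an equiangular tight frame (ETF) if they form a UNTF and there is $\alpha\in[0,1]$ with $|\langle \bm v_i,\bm v_j\rangle| = \alpha$ for all $i\ne j$. $\mathsf{Gram}$ denotes the Gram matrix. $\mathscr{E}_2^N := \{\bm X \in \mathbb{R}^{N\times N}_{\mathrm{sym}} : \bm X\succeq 0,\ X_{ii}=1\ \forall i\}$. For $\bm X\in\mathscr{E}_2^N$, $\mathsf{pert}_{\mathscr{E}_2^N}(\bm X) := \{\bm A\in\mathbb{R}^{N\times N}_{\mathrm{sym}} : \bm X\pm t\bm A\in\mathscr{E}_2^N \text{ for all sufficiently small } t>0\}$. For $\bm A\in\mathbb{R}^{N\times N}$, $\mathrm{vec}(\bm A)\in\mathbb{R}^{N^2}$ has entries $\mathrm{vec}(\bm A)_{(ij)} = A_{ij}$ (lexicographic order). A degree 4 pseudomoment matrix is a matrix $\bm Y \in \mathbb{R}^{N^2\times N^2}$, rows and columns indexed by pairs $(ij)\in[N]^2$ (lexicographically ordered), such that: (1) $\bm Y\succeq 0$; (2) $Y_{(ij)(kk)}$ does not depend on $k$; (3) $Y_{(ii)(ii)} = 1$ for all $i$; (4) $Y_{(ij)(k\ell)}$ is invariant under all permutations of the four indices $i,j,k,\ell$. Such $\bm Y$ extends $\bm X\in\mathbb{R}^{N\times N}_{\mathrm{sym}}$ if $Y_{(1i)(1j)} = X_{ij}$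 for all $i,j$. $\mathscr{E}_4^N$ is the set of symmetric $\bm X \in \mathbb{R}^{N\times N}$ that are extended by some degree 4 pseudomoment matrix. *)

theory Defs
  imports Complex_Main "HOL-Combinatorics.Permutations"
begin

text \<open>Conventions: indices are natural numbers starting at 0; the vectors
  \<open>v_1,\<dots>,v_N \<in> \<real>^r\<close> are rendered as \<open>v :: nat \<Rightarrow> nat \<Rightarrow> real\<close>, where \<open>v i\<close>
  (for \<open>i < N\<close>) is the i-th vector with coordinates \<open>v i k\<close> (for \<open>k < r\<close>).
  N x N matrices are functions \<open>nat \<Rightarrow> nat \<Rightarrow> real\<close> of which only the entries
  with indices below N matter; N^2 x N^2 matrices are functions on pairs.
  The paper's index 1 is index 0 here.\<close>

definition pairs :: "nat \<Rightarrow> (nat \<times> nat) set" where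
  "pairs N = {..<N} \<times> {..<N}"

definition psd_on :: "'i set \<Rightarrow> ('i \<Rightarrow> 'i \<Rightarrow> real) \<Rightarrow> bool" where
  "psd_on I M \<longleftrightarrow> (\<forall>p\<in>I. \<forall>q\<in>I. M p q = M q p) \<and>
     (\<forall>z. (\<Sum>p\<in>I. \<Sum>q\<in>I. z p * M p q * z q) \<ge> 0)"

definition UNTF :: "nat \<Rightarrow> nat \<Rightarrow> (nat \<Rightarrow> nat \<Rightarrow> real) \<Rightarrow> bool" where
  "UNTF N r v \<longleftrightarrow> (\<forall>i<N. (\<Sum>k<r. (v i k)^2) = 1) \<and>
     (\<forall>k<r. \<forall>l<r. (\<Sum>i<N. v i k * v i l) = (if k = l then real N / real r else 0))"

definition inner_v :: "nat \<Rightarrow> (nat \<Rightarrow> nat \<Rightarrow> real) \<Rightarrow> nat \<Rightarrow> nat \<Rightarrow> real" where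
  "inner_v r v i j = (\<Sum>k<r. v i k * v j k)"

definition ETF :: "nat \<Rightarrow> nat \<Rightarrow> (nat \<Rightarrow> nat \<Rightarrow> real) \<Rightarrow> bool" where
  "ETF N r v \<longleftrightarrow> UNTF N r v \<and>
     (\<exists>\<alpha>\<in>{0..1}. \<forall>i<N. \<forall>j<N. i \<noteq> j \<longrightarrow> \<bar>inner_v r v i j\<bar> = \<alpha>)"

definition Gram :: "nat \<Rightarrow> (nat \<Rightarrow> nat \<Rightarrow> real) \<Rightarrow> nat \<Rightarrow> nat \<Rightarrow> real" where
  "Gram r v = (\<lambda>i j. inner_v r v i j)"

definition sym_on :: "nat \<Rightarrow> (nat \<Rightarrow> nat \<Rightarrow> real) \<Rightarrow> bool" where
  "sym_on N X \<longleftrightarrow> (\<forall>i<N. \<forall>j<N. X i j = X j i)"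

definition E2 :: "nat \<Rightarrow> (nat \<Rightarrow> nat \<Rightarrow> real) \<Rightarrow> bool" where
  "E2 N X \<longleftrightarrow> sym_on N X \<and> psd_on {..<N} X \<and> (\<forall>i<N. X i i = 1)"

definition pert_E2 :: "nat \<Rightarrow> (nat \<Rightarrow> nat \<Rightarrow> real) \<Rightarrow> (nat \<Rightarrow> nat \<Rightarrow> real) set" where
  "pert_E2 N X = {A. sym_on N A \<and> (\<exists>\<epsilon>>0. \<forall>t. 0 < t \<and> t < \<epsilon> \<longrightarrow>
       E2 N (\<lambda>i j. X i j + t * A i j) \<and> E2 N (\<lambda>i j. X i j - t * A i j))}"

definition vec :: "(nat \<Rightarrow> nat \<Rightarrow> real) \<Rightarrow> nat \<times> nat \<Rightarrow> real" where
  "vec A = (\<lambda>(i,j). A i j)"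

definition vec_space :: "nat \<Rightarrow> (nat \<Rightarrow> nat \<Rightarrow> real) set \<Rightarrow> (nat \<times> nat \<Rightarrow> real) set" where
  "vec_space N S = {w. \<exists>A\<in>S. \<forall>p\<in>pairs N. w p = vec A p}"

definition orth_proj :: "nat \<Rightarrow> (nat \<times> nat \<Rightarrow> real) set \<Rightarrow>
     (nat \<times> nat \<Rightarrow> nat \<times> nat \<Rightarrow> real) \<Rightarrow> bool" where
  "orth_proj N S P \<longleftrightarrow> (\<forall>w. let Pw = (\<lambda>p. \<Sum>q\<in>pairs N. P p q * w q) in
       Pw \<in> S \<and> (\<forall>s\<in>S. (\<Sum>p\<in>pairs N. (w p - Pw p) * s p) = 0))"

definition pseudomoment4 :: "nat \<Rightarrow> (nat \<times> nat \<Rightarrow> nat \<times> nat \<Rightarrow> real) \<Rightarrow> bool" where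
  "pseudomoment4 N Y \<longleftrightarrow>
     psd_on (pairs N) Y \<and>
     (\<forall>i<N. \<forall>j<N. \<forall>k<N. \<forall>k'<N. Y (i,j) (k,k) = Y (i,j) (k',k')) \<and>
     (\<forall>i<N. Y (i,i) (i,i) = 1) \<and>
     (\<forall>(g::nat \<Rightarrow> nat) (\<sigma>::nat \<Rightarrow> nat). (\<forall>m<4. g m < N) \<longrightarrow> \<sigma> permutes {..<4} \<longrightarrow>
        Y (g 0, g 1) (g 2, g 3) = Y (g (\<sigma> 0), g (\<sigma> 1)) (g (\<sigma> 2), g (\<sigma> 3)))"

definition extends4 :: "nat \<Rightarrow> (nat \<times> nat \<Rightarrow> nat \<times> nat \<Rightarrow> real) \<Rightarrow> (nat \<Rightarrow> nat \<Rightarrow> real) \<Rightarrow> bool" where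
  "extends4 N Y X \<longleftrightarrow> (\<forall>i<N. \<forall>j<N. Y (0,i) (0,j) = X i j)"

definition E4 :: "nat \<Rightarrow> (nat \<Rightarrow> nat \<Rightarrow> real) \<Rightarrow> bool" where
  "E4 N X \<longleftrightarrow> sym_on N X \<and> (\<exists>Y. pseudomoment4 N Y \<and> extends4 N Y X)"

end

theory Submission
  imports Defs
begin

text \<open>
  The Gram matrix \<open>X\<close> of an equiangular tight frame satisfies \<open>X\<^sup>2 = (N/r) X\<close>, and its
  off-diagonal entries have the common square \<open>w = (N - r) / (r (N - 1))\<close> (Welch).

  Writing a test matrix \<open>Z\<close> through the frame as the symmetric \<open>r \<times> r\<close> matrix \<open>S\<close>, the
  quadratic form of the candidate \<open>Y\<close> becomes \<open>\<alpha> ((tr S)\<^sup>2 + 2 \<parallel>S\<parallel>\<^sup>2) - \<beta> \<Sum>\<^sub>m (v\<^sub>m\<^sup>T S v\<^sub>m)\<^sup>2\<close>.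
  Expanding a square with tightness and equiangularity bounds the fourth-moment sum, and for
  the given coefficients \<open>\<alpha>, \<beta>\<close> what remains is exactly \<open>(tr S)\<^sup>2 \<ge> 0\<close>. The entries of \<open>Y\<close>
  are symmetric in all four indices and \<open>Y\<^bsub>(ij)(kk)\<^esub> = X\<^bsub>ij\<^esub>\<close> by the same identities.

  Conversely, a dual frame shows that \<open>r(r+1)/2 - N\<close> is a sum of squares (Gerzon's bound)
  which vanishes only if the \<open>v\<^sub>m v\<^sub>m\<^sup>T\<close> span all symmetric matrices. Positivity of a
  pseudomoment extension \<open>Y\<close> against kernel vectors of \<open>X\<close> makes each row block
  \<open>Y\<^bsub>(st),\<cdot>\<^esub> - X\<^bsub>st\<^esub> X\<close> a hollow matrix \<open>D\<close> with \<open>D X = (N/r) D\<close>; at Gerzon's bound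
  such \<open>D\<close> vanish, so \<open>Y = vec X vec X\<^sup>T\<close>, contradicting \<open>Y\<^bsub>(01)(01)\<^esub> = 1 > w = X\<^bsub>01\<^esub>\<^sup>2\<close>.

  Finally \<open>(Y - vec X vec X\<^sup>T) / K\<close>, with \<open>K = N\<^sup>2 (1 - 1/r) / c\<close>, is the projection onto the perturbations of \<open>X\<close>: it fixes
  them (they are hollow, orthogonal to \<open>X\<close> and satisfy \<open>A X = (N/r) A\<close>) and maps into them,
  since its images have quadratic forms dominated by that of \<open>X\<close>.
\<close>

lemma sum_swap_double:
  "(\<Sum>a\<in>A. \<Sum>b\<in>A. \<Sum>m\<in>B. \<Sum>n\<in>B. f a b m n) = (\<Sum>m\<in>B. \<Sum>n\<in>B. \<Sum>a\<in>A. \<Sum>b\<in>A. f a b m n)"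
  by (simp only: sum.swap[where A=A and B=B])

lemma sum_pairs: "(\<Sum>p\<in>pairs N. f p) = (\<Sum>i<N. \<Sum>j<N. f (i,j))"
  unfolding pairs_def by (simp add: sum.cartesian_product)

lemma sum_Times: "(\<Sum>p\<in>A \<times> B. g p) = (\<Sum>a\<in>A. \<Sum>b\<in>B. g (a,b))"
  by (simp add: sum.cartesian_product)

lemma quadratic_form_factor:
  fixes Z :: "'i \<Rightarrow> 'i \<Rightarrow> real" and F G :: "'i \<Rightarrow> 'i \<Rightarrow> 'm \<Rightarrow> real"
  shows "(\<Sum>i\<in>I. \<Sum>j\<in>I. \<Sum>k\<in>I. \<Sum>l\<in>I. Z i j * (\<Sum>m\<in>A. F i j m * G k l m) * Z k l)
    = (\<Sum>m\<in>A. (\<Sum>i\<in>I. \<Sum>j\<in>I. Z i j * F i j m) * (\<Sum>k\<in>I. \<Sum>l\<in>I. Z k l * G k l m))"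
proof -
  have "(\<Sum>m\<in>A. (\<Sum>i\<in>I. \<Sum>j\<in>I. Z i j * F i j m) * (\<Sum>k\<in>I. \<Sum>l\<in>I. Z k l * G k l m))
     = (\<Sum>m\<in>A. (\<Sum>k\<in>I. \<Sum>l\<in>I. Z k l * G k l m) * (\<Sum>i\<in>I. \<Sum>j\<in>I. Z i j * F i j m))"
    by (simp add: mult.commute)
  also have "\<dots> = (\<Sum>m\<in>A. \<Sum>i\<in>I. \<Sum>j\<in>I. \<Sum>k\<in>I. \<Sum>l\<in>I. Z i j * F i j m * G k l m * Z k l)"
    by (simp only: sum_distrib_right sum_distrib_left) (simp add: mult_ac)
  also have "\<dots> = (\<Sum>i\<in>I. \<Sum>j\<in>I. \<Sum>k\<in>I. \<Sum>l\<in>I. \<Sum>m\<in>A. Z i j * F i j m * G k l m * Z k l)"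
    by (simp only: sum.swap[where B=A])
  also have "\<dots> = (\<Sum>i\<in>I. \<Sum>j\<in>I. \<Sum>k\<in>I. \<Sum>l\<in>I. Z i j * (\<Sum>m\<in>A. F i j m * G k l m) * Z k l)"
    by (simp add: sum_distrib_left sum_distrib_right mult_ac)
  finally show ?thesis by simp
qed

lemma sum2_nonneg_eq_0:
  fixes f :: "'a \<Rightarrow> 'b \<Rightarrow> real"
  assumes "finite A" "finite B" "\<And>a b. a \<in> A \<Longrightarrow> b \<in> B \<Longrightarrow> 0 \<le> f a b"
    and "(\<Sum>a\<in>A. \<Sum>b\<in>B. f a b) = 0" "a \<in> A" "b \<in> B"
  shows "f a b = 0"
proof -
  have "(\<Sum>b\<in>B. f a b) = 0"
    using assms sum_nonneg_eq_0_iff[of A "\<lambda>a. \<Sum>b\<in>B. f a b"] by (simp add: sum_nonneg)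
  then show ?thesis using assms sum_nonneg_eq_0_iff[of B "f a"] by simp
qed

lemma quadratic_nonneg_imp_linear_zero:
  fixes g m :: real
  assumes nonneg: "\<And>s. 0 \<le> 2 * s * g + s^2 * m"
  shows "g = 0"
proof -
  have m: "0 \<le> m" using nonneg[of 1] nonneg[of "-1"] by simp
  define s where "s = - g / (m + 1)"
  have hs: "s * (m + 1) = - g" unfolding s_def using m by simp
  have "0 \<le> (2 * s * g + s^2 * m) * (m + 1)^2"
    using nonneg[of s] by simp
  also have "\<dots> = 2 * (s * (m + 1)) * g * (m + 1) + (s * (m + 1))^2 * m"
    by (simp add: power2_eq_square algebra_simps)
  also have "\<dots> = - (g^2 * (m + 2))"
    unfolding hs by (simp add: power2_eq_square algebra_simps)
  finally have "g^2 * (m + 2) \<le> 0" by simp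
  then show ?thesis using m by (simp add: mult_le_0_iff)
qed

lemma psd_on_form_zero_imp_kernel:
  fixes M :: "'i \<Rightarrow> 'i \<Rightarrow> real"
  assumes fin: "finite I" and psd: "psd_on I M"
    and zero: "(\<Sum>p\<in>I. \<Sum>q\<in>I. z p * M p q * z q) = 0" and p0: "p0 \<in> I"
  shows "(\<Sum>q\<in>I. M p0 q * z q) = 0"
proof (rule quadratic_nonneg_imp_linear_zero)
  fix s :: real
  have sym: "\<And>p q. p \<in> I \<Longrightarrow> q \<in> I \<Longrightarrow> M p q = M q p"
    and form: "\<And>z. 0 \<le> (\<Sum>p\<in>I. \<Sum>q\<in>I. z p * M p q * z q)"
    using psd unfolding psd_on_def by auto
  define e where "e = (\<lambda>p. if p = p0 then s else 0)"
  have left: "(\<Sum>p\<in>I. e p * f p) = s * f p0" for f :: "'i \<Rightarrow> real"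
  proof -
    have "(\<Sum>p\<in>I. e p * f p) = (\<Sum>p\<in>I. if p = p0 then s * f p else 0)"
      by (rule sum.cong) (auto simp: e_def)
    then show ?thesis using fin p0 by simp
  qed
  have right: "(\<Sum>q\<in>I. f q * e q) = s * f p0" for f :: "'i \<Rightarrow> real"
    using left[of f] by (simp add: mult.commute)
  have "(\<Sum>p\<in>I. \<Sum>q\<in>I. (z p + e p) * M p q * (z q + e q))
      = (\<Sum>p\<in>I. \<Sum>q\<in>I. z p * M p q * z q) + (\<Sum>p\<in>I. e p * (\<Sum>q\<in>I. M p q * z q))
        + (\<Sum>p\<in>I. z p * (\<Sum>q\<in>I. M p q * e q)) + (\<Sum>p\<in>I. e p * (\<Sum>q\<in>I. M p q * e q))"
    by (simp add: algebra_simps sum.distrib sum_distrib_left)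
  also have "(\<Sum>p\<in>I. z p * (\<Sum>q\<in>I. M p q * e q)) = s * (\<Sum>q\<in>I. M p0 q * z q)"
    unfolding right left using sym p0 by (simp add: sum_distrib_left mult_ac)
  finally have "(\<Sum>p\<in>I. \<Sum>q\<in>I. (z p + e p) * M p q * (z q + e q))
      = 2 * s * (\<Sum>q\<in>I. M p0 q * z q) + s^2 * M p0 p0"
    unfolding left right zero by (simp add: power2_eq_square)
  then show "0 \<le> 2 * s * (\<Sum>q\<in>I. M p0 q * z q) + s^2 * M p0 p0"
    using form[of "\<lambda>p. z p + e p"] by simp
qed

lemma abs_combination_le:
  fixes a b d A B :: real
  assumes "0 \<le> A" "0 \<le> B"
  shows "\<bar>a + 2 * A * b - B * d\<bar> \<le> \<bar>a\<bar> + 2 * A * \<bar>b\<bar> + B * \<bar>d\<bar>"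
proof -
  have "\<bar>2 * A * b\<bar> = 2 * A * \<bar>b\<bar>" "\<bar>B * d\<bar> = B * \<bar>d\<bar>" using assms by (simp_all add: abs_mult)
  moreover have "\<bar>a + 2 * A * b - B * d\<bar> \<le> \<bar>a\<bar> + \<bar>2 * A * b\<bar> + \<bar>B * d\<bar>"
    using abs_triangle_ineq4[of "a + 2 * A * b" "B * d"] abs_triangle_ineq[of a "2 * A * b"] by linarith
  ultimately show ?thesis by simp
qed

lemma orth_proj_unique:
  assumes P1: "orth_proj N S P1" and P2: "orth_proj N S P2" and pq: "p \<in> pairs N" "q \<in> pairs N"
  shows "P1 p q = P2 p q"
proof -
  define e where "e = (\<lambda>p'. if p' = q then 1 else (0::real))"
  define u1 where "u1 = (\<lambda>p. \<Sum>q\<in>pairs N. P1 p q * e q)"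
  define u2 where "u2 = (\<lambda>p. \<Sum>q\<in>pairs N. P2 p q * e q)"
  have fin: "finite (pairs N)" unfolding pairs_def by simp
  have u1S: "u1 \<in> S" and o1: "\<And>s. s \<in> S \<Longrightarrow> (\<Sum>p\<in>pairs N. (e p - u1 p) * s p) = 0"
    using P1 unfolding orth_proj_def u1_def Let_def by blast+
  have u2S: "u2 \<in> S" and o2: "\<And>s. s \<in> S \<Longrightarrow> (\<Sum>p\<in>pairs N. (e p - u2 p) * s p) = 0"
    using P2 unfolding orth_proj_def u2_def Let_def by blast+
  have "(\<Sum>p\<in>pairs N. (u1 p - u2 p)^2) =
      ((\<Sum>p\<in>pairs N. (e p - u2 p) * u1 p) - (\<Sum>p\<in>pairs N. (e p - u2 p) * u2 p))
      - ((\<Sum>p\<in>pairs N. (e p - u1 p) * u1 p) - (\<Sum>p\<in>pairs N. (e p - u1 p) * u2 p))"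
    by (simp add: sum_subtractf[symmetric] power2_eq_square algebra_simps)
  also have "\<dots> = 0" using o1[OF u1S] o1[OF u2S] o2[OF u1S] o2[OF u2S] by simp
  finally have "(u1 p - u2 p)^2 = 0" using fin pq by (subst (asm) sum_nonneg_eq_0_iff) auto
  moreover have "u1 p = P1 p q" "u2 p = P2 p q"
    unfolding u1_def u2_def e_def using fin pq by (simp_all add: if_distrib cong: if_cong)
  ultimately show ?thesis by simp
qed

lemma permutes_invariant_if_transpositions:
  fixes H :: "(nat \<Rightarrow> nat) \<Rightarrow> real"
  assumes transp: "\<And>g a b. a < n \<Longrightarrow> b < n \<Longrightarrow> H (g \<circ> Transposition.transpose a b) = H g"
    and \<sigma>: "\<sigma> permutes {..<n}"
  shows "H (g \<circ> \<sigma>) = H g"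
proof -
  have "\<forall>g. H (g \<circ> \<sigma>) = H g"
    using \<sigma> finite_lessThan
  proof (induction rule: permutes_induct)
    case id
    then show ?case by simp
  next
    case (swap a b p)
    show ?case
    proof
      fix g
      have "H (g \<circ> (Transposition.transpose a b \<circ> p)) = H ((g \<circ> Transposition.transpose a b) \<circ> p)"
        by (simp add: o_assoc)
      also have "\<dots> = H (g \<circ> Transposition.transpose a b)" using swap by blast
      also have "\<dots> = H g" using swap transp by simp
      finally show "H (g \<circ> (Transposition.transpose a b \<circ> p)) = H g" .
    qed
  qed
  then show ?thesis by blast
qed

lemma permutes4_invariant:
  fixes F :: "nat \<Rightarrow> nat \<Rightarrow> nat \<Rightarrow> nat \<Rightarrow> real" and \<sigma> g :: "nat \<Rightarrow> nat"
  assumes s01: "\<And>i j k l. F j i k l = F i j k l"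
    and s12: "\<And>i j k l. F i k j l = F i j k l"
    and s23: "\<And>i j k l. F i j l k = F i j k l"
    and \<sigma>: "\<sigma> permutes {..<4}"
  shows "F (g (\<sigma> 0)) (g (\<sigma> 1)) (g (\<sigma> 2)) (g (\<sigma> 3)) = F (g 0) (g 1) (g 2) (g 3)"
proof -
  have s02: "\<And>i j k l. F k j i l = F i j k l" by (metis s01 s12)
  have s03: "\<And>i j k l. F l j k i = F i j k l" by (metis s01 s12 s23)
  have s13: "\<And>i j k l. F i l k j = F i j k l" by (metis s12 s23)
  let ?H = "\<lambda>g. F (g 0) (g 1) (g 2) (g 3)"
  have "?H (g \<circ> \<sigma>) = ?H g"
  proof (rule permutes_invariant_if_transpositions[OF _ \<sigma>])
    fix g :: "nat \<Rightarrow> nat" and a b :: nat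
    assume "a < 4" "b < 4"
    then have "a \<in> {0,1,2,3}" "b \<in> {0,1,2,3}" by auto
    then show "?H (g \<circ> Transposition.transpose a b) = ?H g"
      by (auto simp: transpose_def s01 s12 s23 s02 s03 s13)
  qed
  then show ?thesis by simp
qed

lemma pseudomoment4I:
  fixes F :: "nat \<Rightarrow> nat \<Rightarrow> nat \<Rightarrow> nat \<Rightarrow> real"
  assumes s01: "\<And>i j k l. F j i k l = F i j k l"
    and s12: "\<And>i j k l. F i k j l = F i j k l"
    and s23: "\<And>i j k l. F i j l k = F i j k l"
    and psd: "\<And>z. 0 \<le> (\<Sum>i<N. \<Sum>j<N. \<Sum>k<N. \<Sum>l<N. z (i,j) * F i j k l * z (k,l))"
    and diag_pair: "\<And>i j k k'. i<N \<Longrightarrow> j<N \<Longrightarrow> k<N \<Longrightarrow> k'<N \<Longrightarrow> F i j k k = F i j k' k'"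
    and one: "\<And>i. i<N \<Longrightarrow> F i i i i = 1"
  shows "pseudomoment4 N (\<lambda>(i,j) (k,l). F i j k l)"
proof -
  have swap: "F k l i j = F i j k l" for i j k l
    using s01[of i k l j] s12[of k i l j] s12[of i j k l] s23[of i k j l] by simp
  have "psd_on (pairs N) (\<lambda>(i,j) (k,l). F i j k l)"
    unfolding psd_on_def
  proof (intro conjI ballI allI)
    fix p q :: "nat \<times> nat"
    show "(\<lambda>(i,j) (k,l). F i j k l) p q = (\<lambda>(i,j) (k,l). F i j k l) q p"
      by (cases p; cases q) (simp add: swap)
  next
    fix z :: "nat \<times> nat \<Rightarrow> real"
    show "0 \<le> (\<Sum>p\<in>pairs N. \<Sum>q\<in>pairs N. z p * (\<lambda>(i,j) (k,l). F i j k l) p q * z q)"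
      unfolding sum_pairs using psd[of z] by simp
  qed
  moreover have "\<forall>(g::nat \<Rightarrow> nat) (\<sigma>::nat \<Rightarrow> nat). (\<forall>m<4. g m < N) \<longrightarrow> \<sigma> permutes {..<4} \<longrightarrow>
      (\<lambda>(i,j) (k,l). F i j k l) (g 0, g 1) (g 2, g 3)
      = (\<lambda>(i,j) (k,l). F i j k l) (g (\<sigma> 0), g (\<sigma> 1)) (g (\<sigma> 2), g (\<sigma> 3))"
  proof (intro allI impI)
    fix g \<sigma> :: "nat \<Rightarrow> nat"
    assume "\<sigma> permutes {..<4}"
    from permutes4_invariant[where F=F and g=g and \<sigma>=\<sigma>, OF s01 s12 s23 this]
    show "(\<lambda>(i,j) (k,l). F i j k l) (g 0, g 1) (g 2, g 3)
      = (\<lambda>(i,j) (k,l). F i j k l) (g (\<sigma> 0), g (\<sigma> 1)) (g (\<sigma> 2), g (\<sigma> 3))"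
      by simp
  qed
  moreover have "\<forall>i<N. \<forall>j<N. \<forall>k<N. \<forall>k'<N.
      (\<lambda>(i,j) (k,l). F i j k l) (i,j) (k,k) = (\<lambda>(i,j) (k,l). F i j k l) (i,j) (k',k')"
    using diag_pair by (simp only: prod.case) blast
  moreover have "\<forall>i<N. (\<lambda>(i,j) (k,l). F i j k l) (i,i) (i,i) = 1"
    using one by simp
  ultimately show ?thesis
    unfolding pseudomoment4_def by blast
qed

lemma pseudomoment4_swaps:
  assumes Y: "pseudomoment4 N Y" and idx: "a < N" "b < N" "c < N" "d < N"
  shows pseudomoment4_rotate: "Y (a,b) (c,d) = Y (c,a) (d,b)"
    and pseudomoment4_swap_right: "Y (a,b) (c,d) = Y (a,b) (d,c)"
proof -
  define g :: "nat \<Rightarrow> nat" where "g = (\<lambda>m. if m = 0 then a else if m = 1 then b else if m = 2 then c else d)"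
  have "\<forall>m<4. g m < N" using idx unfolding g_def by auto
  then have perm: "Y (g 0, g 1) (g 2, g 3) = Y (g (\<sigma> 0), g (\<sigma> 1)) (g (\<sigma> 2), g (\<sigma> 3))"
    if "\<sigma> permutes {..<4}" for \<sigma>
    using Y that unfolding pseudomoment4_def by blast
  have "Transposition.transpose (0::nat) 1 \<circ> Transposition.transpose 0 2 \<circ> Transposition.transpose 2 3
      permutes {..<4}"
    by (intro permutes_compose permutes_swap_id) auto
  from perm[OF this] show "Y (a,b) (c,d) = Y (c,a) (d,b)" by (simp add: transpose_def g_def)
  have "Transposition.transpose (2::nat) 3 permutes {..<4}" by (intro permutes_swap_id) auto
  from perm[OF this] show "Y (a,b) (c,d) = Y (a,b) (d,c)" by (simp add: transpose_def g_def)
qed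

lemma fourth_moment_identity:
  fixes n R w t SS Yv :: real
  assumes "R \<noteq> 0" and "n = R * (1 - w) + R * n * w"
  shows "(1-w)*((1-w)*(SS - t^2/R) + n*t^2/R^2 - Yv)
    = (w*(n/R*t)^2 + (1-w)*Yv) - 2*(1-w)*Yv + (1-w)^2*SS
      + (R*(t*n*w/R)^2 - 2*(t*n*w/R)*(n/R*t) + 2*(1-w)*(t*n*w/R)*t)"
  using assms by (simp add: field_simps power2_eq_square) algebra

lemma moment_bound_identity:
  fixes n R w t SS c :: real
  assumes "R \<ge> 2" "n \<ge> 2" "w = (n - R) / (R * (n - 1))" "c = R * (R + 1) / 2 - n" "c \<noteq> 0"
  shows "(R * (R - 1) / 2) / c * (t^2 + 2*SS) - (R^2 * (1 - 1/n)) / c * ((1-w)*(SS - t^2/R) + n*t^2/R^2) = t^2"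
  using assms by (simp add: field_simps power2_eq_square) algebra

lemma moment_coefficient_identities:
  fixes n R w c :: real
  assumes "R \<ge> 2" "n \<ge> 2" "w = (n - R) / (R * (n - 1))" "c = R * (R + 1) / 2 - n" "c \<noteq> 0"
  shows "(R * (R - 1) / 2) / c * 2 = (R^2 * (1 - 1/n)) / c * (1-w)"
    and "(R * (R - 1) / 2) / c - (R^2 * (1 - 1/n)) / c * (w * (n / R)) = 1"
  using assms by (simp_all add: field_simps power2_eq_square) algebra+

locale etf_gram =
  fixes N r :: nat and v :: "nat \<Rightarrow> nat \<Rightarrow> real" and w :: real and X :: "nat \<Rightarrow> nat \<Rightarrow> real"
  assumes N_pos: "N \<ge> 1" and r_pos: "r \<ge> 1"
    and unit_norm: "\<And>i. i < N \<Longrightarrow> (\<Sum>k<r. (v i k)^2) = 1"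
    and tight: "\<And>k l. k < r \<Longrightarrow> l < r \<Longrightarrow>
      (\<Sum>i<N. v i k * v i l) = (if k = l then real N / real r else 0)"
    and w_nonneg: "0 \<le> w" and w_le_one: "w \<le> 1"
    and off_diag_sq: "\<And>i j. i < N \<Longrightarrow> j < N \<Longrightarrow> i \<noteq> j \<Longrightarrow> (X i j)^2 = w"
    and gram: "\<And>i j. X i j = (\<Sum>k<r. v i k * v j k)"
begin

lemma gram_sym: "X i j = X j i"
  unfolding gram by (simp add: mult.commute)

lemma gram_diag: "i < N \<Longrightarrow> X i i = 1"
  unfolding gram using unit_norm by (simp add: power2_eq_square)

lemma gram_entry_sq: "i < N \<Longrightarrow> m < N \<Longrightarrow> (X i m)^2 = w + (1 - w) * (if i = m then 1 else 0)"
  using off_diag_sq gram_diag by auto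

lemma gram_abs_le_one: "i < N \<Longrightarrow> j < N \<Longrightarrow> \<bar>X i j\<bar> \<le> 1"
  using gram_entry_sq[of i j] w_nonneg w_le_one abs_square_le_1[of "X i j"] by (auto split: if_splits)

lemma gram_square: "(\<Sum>m<N. X i m * X m j) = real N / real r * X i j"
proof -
  have "(\<Sum>m<N. X i m * X m j) = (\<Sum>m<N. \<Sum>a<r. \<Sum>b<r. v i a * v j b * (v m a * v m b))"
    unfolding gram by (simp add: sum_product mult_ac)
  also have "\<dots> = (\<Sum>a<r. \<Sum>b<r. v i a * v j b * (\<Sum>m<N. v m a * v m b))"
    by (simp add: sum_distrib_left sum.swap[of _ "{..<N}"])
  also have "\<dots> = (\<Sum>a<r. \<Sum>b<r. v i a * v j b * (if a = b then real N / real r else 0))"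
    by (intro sum.cong refl) (simp add: tight)
  also have "\<dots> = real N / real r * X i j"
    unfolding gram by (simp add: sum_distrib_left mult_ac if_distrib cong: if_cong)
  finally show ?thesis .
qed

lemma gram_rows_inner: "(\<Sum>m<N. X i m * X j m) = real N / real r * X i j"
  using gram_square[of i j] by (simp add: gram_sym[of j])

lemma welch_identity: "real N / real r = 1 + (real N - 1) * w"
proof -
  have "real N / real r = (\<Sum>m<N. (X 0 m)^2)"
    using gram_rows_inner[of 0 0] gram_diag[of 0] N_pos by (simp add: power2_eq_square)
  also have "\<dots> = (\<Sum>m<N. w + (1 - w) * (if 0 = m then 1 else 0))"
    using N_pos by (intro sum.cong refl) (simp add: gram_entry_sq)
  also have "\<dots> = real N * w + (1 - w)"
    using N_pos by (simp add: sum.distrib sum_distrib_left[symmetric])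
  finally show ?thesis by (simp add: algebra_simps)
qed

lemma
  assumes "r \<ge> 2"
  shows w_less_one: "w < 1" and N_ge_2: "N \<ge> 2"
proof -
  show "w < 1"
  proof (rule ccontr)
    assume "\<not> w < 1"
    then have "real N / real r = real N" using welch_identity w_le_one by simp
    then show False using assms N_pos by (simp add: field_simps)
  qed
  show "N \<ge> 2"
  proof (rule ccontr)
    assume "\<not> N \<ge> 2"
    then have "N = 1" using N_pos by simp
    then have "1 / real r = 1" using welch_identity by simp
    then show False using assms by (simp add: field_simps)
  qed
qed

lemma w_eq: "r \<ge> 2 \<Longrightarrow> w = (real N - real r) / (real r * (real N - 1))"
  using welch_identity N_ge_2 by (simp add: field_simps)

lemma gram_quadratic_form: "(\<Sum>i<N. \<Sum>j<N. z i * X i j * z j) = (\<Sum>a<r. (\<Sum>i<N. z i * v i a)^2)"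
proof -
  have "(\<Sum>a<r. (\<Sum>i<N. z i * v i a)^2) = (\<Sum>a<r. \<Sum>i<N. \<Sum>j<N. z i * v i a * (z j * v j a))"
    by (simp add: power2_eq_square sum_product)
  also have "\<dots> = (\<Sum>i<N. \<Sum>j<N. \<Sum>a<r. z i * v i a * (z j * v j a))"
    by (simp only: sum.swap[where A="{..<r}"])
  also have "\<dots> = (\<Sum>i<N. \<Sum>j<N. z i * X i j * z j)"
    unfolding gram by (simp add: sum_distrib_left sum_distrib_right mult_ac)
  finally show ?thesis by simp
qed

lemma gram_psd: "0 \<le> (\<Sum>i<N. \<Sum>j<N. z i * X i j * z j)"
  unfolding gram_quadratic_form by (simp add: sum_nonneg)

lemma gram_image_norm:
  "(\<Sum>m<N. (\<Sum>i<N. z i * X i m)^2) = real N / real r * (\<Sum>i<N. \<Sum>j<N. z i * X i j * z j)"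
proof -
  have "(\<Sum>m<N. (\<Sum>i<N. z i * X i m)^2) = (\<Sum>m<N. \<Sum>i<N. \<Sum>j<N. z i * z j * (X i m * X j m))"
    by (simp add: power2_eq_square sum_product mult_ac)
  also have "\<dots> = (\<Sum>i<N. \<Sum>m<N. \<Sum>j<N. z i * z j * (X i m * X j m))"
    by (rule sum.swap)
  also have "\<dots> = (\<Sum>i<N. \<Sum>j<N. \<Sum>m<N. z i * z j * (X i m * X j m))"
    by (rule sum.cong[OF refl], rule sum.swap)
  also have "\<dots> = (\<Sum>i<N. \<Sum>j<N. z i * z j * (real N / real r * X i j))"
    by (simp add: sum_distrib_left[symmetric] gram_rows_inner)
  finally show ?thesis by (simp add: sum_distrib_left mult_ac)
qed

lemma frame_trace: "(\<Sum>m<N. \<Sum>a<r. \<Sum>b<r. S a b * v m a * v m b) = real N / real r * (\<Sum>a<r. S a a)"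
proof -
  have "(\<Sum>m<N. \<Sum>a<r. \<Sum>b<r. S a b * v m a * v m b) = (\<Sum>a<r. \<Sum>b<r. S a b * (\<Sum>m<N. v m a * v m b))"
    by (simp add: sum_distrib_left sum.swap[where B="{..<N}"] mult_ac)
  also have "\<dots> = (\<Sum>a<r. \<Sum>b<r. S a b * (if a = b then real N / real r else 0))"
    by (intro sum.cong refl) (simp add: tight)
  also have "\<dots> = real N / real r * (\<Sum>a<r. S a a)"
    by (simp add: sum_distrib_left if_distrib mult.commute cong: if_cong)
  finally show ?thesis .
qed

lemma frame_combination_norm:
  "(\<Sum>a<r. \<Sum>b<r. (\<Sum>m<N. y m * v m a * v m b)^2) = w * (\<Sum>m<N. y m)^2 + (1 - w) * (\<Sum>m<N. (y m)^2)"
proof -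
  have "(\<Sum>a<r. \<Sum>b<r. (\<Sum>m<N. y m * v m a * v m b)^2)
      = (\<Sum>a<r. \<Sum>b<r. \<Sum>m<N. \<Sum>n<N. y m * y n * (v m a * v n a) * (v m b * v n b))"
    unfolding power2_eq_square by (simp add: sum_product mult_ac)
  also have "\<dots> = (\<Sum>m<N. \<Sum>n<N. \<Sum>a<r. \<Sum>b<r. y m * y n * (v m a * v n a) * (v m b * v n b))"
    by (rule sum_swap_double)
  also have "\<dots> = (\<Sum>m<N. \<Sum>n<N. y m * y n * (X m n)^2)"
    unfolding gram power2_eq_square by (simp add: sum_distrib_left sum_distrib_right mult_ac)
  also have "\<dots> = (\<Sum>m<N. \<Sum>n<N. w * (y m * y n) + (if m = n then (1 - w) * (y m * y m) else 0))"
    by (intro sum.cong refl) (auto simp: gram_entry_sq algebra_simps)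
  also have "\<dots> = w * (\<Sum>m<N. y m)^2 + (1 - w) * (\<Sum>m<N. (y m)^2)"
    unfolding power2_eq_square by (simp add: sum.distrib sum_distrib_left sum_distrib_right mult_ac)
  finally show ?thesis .
qed

text \<open>With \<open>y\<^sub>m = v\<^sub>m\<^sup>T S v\<^sub>m\<close>, \<open>W = \<Sum>\<^sub>m y\<^sub>m v\<^sub>m v\<^sub>m\<^sup>T\<close>, \<open>t = tr S\<close> and \<open>\<kappa> = t N w / r\<close>,
  tightness and equiangularity turn \<open>\<parallel>W - (1-w) S - \<kappa> I\<parallel>\<^sup>2 \<ge> 0\<close> into \<open>1 - w\<close> times the
  claimed inequality.\<close>

lemma frame_fourth_moment_bound:
  fixes S :: "nat \<Rightarrow> nat \<Rightarrow> real"
  assumes r2: "r \<ge> 2"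
  shows "(\<Sum>m<N. (\<Sum>a<r. \<Sum>b<r. S a b * v m a * v m b)^2)
     \<le> (1-w)*((\<Sum>a<r. \<Sum>b<r. (S a b)^2) - (\<Sum>a<r. S a a)^2/r) + N*(\<Sum>a<r. S a a)^2/r^2"
proof -
  define t where "t = (\<Sum>a<r. S a a)"
  define SS where "SS = (\<Sum>a<r. \<Sum>b<r. (S a b)^2)"
  define y where "y = (\<lambda>m. \<Sum>a<r. \<Sum>b<r. S a b * v m a * v m b)"
  define Yv where "Yv = (\<Sum>m<N. (y m)^2)"
  define W where "W = (\<lambda>a b. \<Sum>m<N. y m * v m a * v m b)"
  define \<kappa> where "\<kappa> = t * N * w / r"
  have sum_y: "(\<Sum>m<N. y m) = N / r * t" unfolding y_def t_def by (rule frame_trace)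
  have WS: "(\<Sum>a<r. \<Sum>b<r. W a b * S a b) = Yv"
  proof -
    have "(\<Sum>a<r. \<Sum>b<r. W a b * S a b) = (\<Sum>m<N. y m * (\<Sum>a<r. \<Sum>b<r. S a b * v m a * v m b))"
      unfolding W_def by (simp add: sum_distrib_left sum_distrib_right sum.swap[where B="{..<N}"] mult_ac)
    then show ?thesis unfolding Yv_def y_def by (simp add: power2_eq_square)
  qed
  have trace_W: "(\<Sum>a<r. W a a) = N / r * t"
  proof -
    have "(\<Sum>a<r. W a a) = (\<Sum>m<N. y m * (\<Sum>a<r. (v m a)^2))"
      unfolding W_def by (simp add: sum_distrib_left sum.swap[where B="{..<N}"] mult_ac power2_eq_square)
    also have "\<dots> = (\<Sum>m<N. y m)" by (intro sum.cong refl) (simp add: unit_norm)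
    finally show ?thesis using sum_y by simp
  qed
  have WW: "(\<Sum>a<r. \<Sum>b<r. (W a b)^2) = w * (N / r * t)^2 + (1-w) * Yv"
    unfolding W_def Yv_def frame_combination_norm sum_y ..
  have sq: "(W a b - (1-w)*S a b - (if a=b then \<kappa> else 0))^2
      = (W a b)^2 - 2*(1-w)*(W a b*S a b) + (1-w)^2*(S a b)^2
        + (if a = b then \<kappa>^2 - 2*\<kappa>*W a a + 2*(1-w)*\<kappa>*S a a else 0)" for a b
    by (auto simp: power2_eq_square algebra_simps)
  have "(\<Sum>a<r. \<Sum>b<r. (W a b - (1-w)*S a b - (if a=b then \<kappa> else 0))^2)
     = (\<Sum>a<r. \<Sum>b<r. (W a b)^2) - 2*(1-w)*(\<Sum>a<r. \<Sum>b<r. W a b * S a b) + (1-w)^2 * SS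
       + (r * \<kappa>^2 - 2*\<kappa>*(\<Sum>a<r. W a a) + 2*(1-w)*\<kappa>*t)"
    unfolding sq SS_def t_def by (simp add: sum.distrib sum_subtractf sum_distrib_left sum.delta)
  also have "\<dots> = (1-w)*((1-w)*(SS - t^2/r) + N*t^2/(real r)^2 - Yv)"
    unfolding WW WS trace_W \<kappa>_def
    by (rule fourth_moment_identity[symmetric]) (use r2 welch_identity in \<open>auto simp: field_simps\<close>)
  finally have "0 \<le> (1-w)*((1-w)*(SS - t^2/r) + N*t^2/(real r)^2 - Yv)"
    by (metis (no_types, lifting) sum_nonneg zero_le_power2)
  then have "0 \<le> (1-w)*(SS - t^2/r) + N*t^2/(real r)^2 - Yv"
    using w_less_one[OF r2] by (simp add: zero_le_mult_iff)
  then show ?thesis unfolding Yv_def y_def SS_def t_def by simp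
qed

definition frame_coords :: "(nat \<Rightarrow> nat \<Rightarrow> real) \<Rightarrow> nat \<Rightarrow> nat \<Rightarrow> real" where
  "frame_coords Z a b = (\<Sum>i<N. \<Sum>j<N. Z i j * v i a * v j b)"

definition frame_sym :: "(nat \<Rightarrow> nat \<Rightarrow> real) \<Rightarrow> nat \<Rightarrow> nat \<Rightarrow> real" where
  "frame_sym Z a b = (frame_coords Z a b + frame_coords Z b a) / 2"

lemma gram_product: "X i k * X j l = (\<Sum>p\<in>{..<r}\<times>{..<r}. (v i (fst p) * v j (snd p)) * (v k (fst p) * v l (snd p)))"
  unfolding gram sum_Times by (simp add: sum_product mult_ac)

lemma quadratic_form_gram_trace:
  "(\<Sum>i<N. \<Sum>j<N. \<Sum>k<N. \<Sum>l<N. Z i j * (X i j * X k l) * Z k l) = (\<Sum>a<r. frame_sym Z a a)^2"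
proof -
  have "(\<Sum>i<N. \<Sum>j<N. \<Sum>k<N. \<Sum>l<N. Z i j * (X i j * X k l) * Z k l)
      = (\<Sum>i<N. \<Sum>j<N. \<Sum>k<N. \<Sum>l<N. Z i j * (\<Sum>p\<in>{..<r}\<times>{..<r}.
          (v i (fst p) * v j (fst p)) * (v k (snd p) * v l (snd p))) * Z k l)"
    unfolding gram_product by (simp add: mult_ac)
  also have "\<dots> = (\<Sum>p\<in>{..<r}\<times>{..<r}. frame_coords Z (fst p) (fst p) * frame_coords Z (snd p) (snd p))"
    unfolding quadratic_form_factor frame_coords_def by (simp add: mult_ac)
  also have "\<dots> = (\<Sum>a<r. frame_coords Z a a)^2"
    unfolding sum_Times by (simp add: power2_eq_square sum_product)
  finally show ?thesis unfolding frame_sym_def by simp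
qed

lemma quadratic_form_gram_cross:
  "(\<Sum>i<N. \<Sum>j<N. \<Sum>k<N. \<Sum>l<N. Z i j * (X i k * X j l + X i l * X j k) * Z k l)
    = 2 * (\<Sum>a<r. \<Sum>b<r. (frame_sym Z a b)^2)"
proof -
  let ?M = "frame_coords Z"
  have T2: "(\<Sum>i<N. \<Sum>j<N. \<Sum>k<N. \<Sum>l<N. Z i j * (X i k * X j l) * Z k l) = (\<Sum>a<r. \<Sum>b<r. ?M a b * ?M a b)"
  proof -
    have "(\<Sum>i<N. \<Sum>j<N. \<Sum>k<N. \<Sum>l<N. Z i j * (X i k * X j l) * Z k l)
        = (\<Sum>p\<in>{..<r}\<times>{..<r}. ?M (fst p) (snd p) * ?M (fst p) (snd p))"
      unfolding gram_product quadratic_form_factor frame_coords_def by (simp add: mult_ac)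
    then show ?thesis unfolding sum_Times by simp
  qed
  have T3: "(\<Sum>i<N. \<Sum>j<N. \<Sum>k<N. \<Sum>l<N. Z i j * (X i l * X j k) * Z k l) = (\<Sum>a<r. \<Sum>b<r. ?M a b * ?M b a)"
  proof -
    have "(\<Sum>i<N. \<Sum>j<N. \<Sum>k<N. \<Sum>l<N. Z i j * (X i l * X j k) * Z k l)
        = (\<Sum>i<N. \<Sum>j<N. \<Sum>k<N. \<Sum>l<N. Z i j * (\<Sum>p\<in>{..<r}\<times>{..<r}.
            (v i (fst p) * v j (snd p)) * (v k (snd p) * v l (fst p))) * Z k l)"
      unfolding gram_product by (simp add: mult_ac)
    also have "\<dots> = (\<Sum>p\<in>{..<r}\<times>{..<r}. ?M (fst p) (snd p) * ?M (snd p) (fst p))"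
      unfolding quadratic_form_factor frame_coords_def by (simp add: mult_ac)
    finally show ?thesis unfolding sum_Times by simp
  qed
  have swap: "(\<Sum>a<r. \<Sum>b<r. ?M b a * ?M b a) = (\<Sum>a<r. \<Sum>b<r. ?M a b * ?M a b)"
    by (rule sum.swap)
  have "2 * (\<Sum>a<r. \<Sum>b<r. (frame_sym Z a b)^2)
      = (\<Sum>a<r. \<Sum>b<r. (?M a b * ?M a b + ?M b a * ?M b a) / 2 + ?M a b * ?M b a)"
    unfolding frame_sym_def
    by (simp add: sum_distrib_left power2_eq_square algebra_simps add_divide_distrib)
  also have "\<dots> = (\<Sum>a<r. \<Sum>b<r. ?M a b * ?M a b) + (\<Sum>a<r. \<Sum>b<r. ?M a b * ?M b a)"
    by (simp add: sum.distrib sum_divide_distrib[symmetric] swap)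
  finally show ?thesis
    unfolding T2[symmetric] T3[symmetric] by (simp add: distrib_left distrib_right sum.distrib)
qed

lemma quadratic_form_gram_quartic:
  "(\<Sum>i<N. \<Sum>j<N. \<Sum>k<N. \<Sum>l<N. Z i j * (\<Sum>m<N. X i m * X j m * X k m * X l m) * Z k l)
    = (\<Sum>m<N. (\<Sum>a<r. \<Sum>b<r. frame_sym Z a b * v m a * v m b)^2)"
proof -
  let ?M = "frame_coords Z"
  have inner: "(\<Sum>i<N. \<Sum>j<N. Z i j * (X i m * X j m)) = (\<Sum>a<r. \<Sum>b<r. frame_sym Z a b * v m a * v m b)" for m
  proof -
    have "(\<Sum>i<N. \<Sum>j<N. Z i j * (X i m * X j m))
        = (\<Sum>i<N. \<Sum>j<N. \<Sum>b<r. \<Sum>a<r. Z i j * v i a * v j b * (v m a * v m b))"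
      unfolding gram by (simp add: sum_product sum_distrib_left mult_ac)
    also have "\<dots> = (\<Sum>b<r. \<Sum>a<r. \<Sum>i<N. \<Sum>j<N. Z i j * v i a * v j b * (v m a * v m b))"
      by (rule sum_swap_double)
    also have "\<dots> = (\<Sum>a<r. \<Sum>b<r. ?M a b * v m a * v m b)"
      unfolding frame_coords_def
      by (subst sum.swap) (simp add: sum_distrib_left sum_distrib_right mult_ac)
    also have "\<dots> = (\<Sum>a<r. \<Sum>b<r. frame_sym Z a b * v m a * v m b)"
    proof -
      have "(\<Sum>a<r. \<Sum>b<r. ?M b a * v m a * v m b) = (\<Sum>a<r. \<Sum>b<r. ?M a b * v m a * v m b)"
        by (subst sum.swap) (simp add: mult_ac)
      then show ?thesis unfolding frame_sym_def
        by (simp add: add_divide_distrib sum.distrib algebra_simps sum_divide_distrib[symmetric])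
    qed
    finally show ?thesis .
  qed
  have "(\<Sum>i<N. \<Sum>j<N. \<Sum>k<N. \<Sum>l<N. Z i j * (\<Sum>m<N. X i m * X j m * X k m * X l m) * Z k l)
      = (\<Sum>m<N. (\<Sum>i<N. \<Sum>j<N. Z i j * (X i m * X j m)) * (\<Sum>k<N. \<Sum>l<N. Z k l * (X k m * X l m)))"
    unfolding quadratic_form_factor[symmetric] by (simp add: mult_ac)
  then show ?thesis unfolding inner by (simp add: power2_eq_square)
qed

lemma quartic_sum_repeated:
  assumes "k < N"
  shows "(\<Sum>m<N. X i m * X j m * X k m * X k m) = w * (real N / real r) * X i j + (1-w) * (X i k * X j k)"
proof -
  have "(\<Sum>m<N. X i m * X j m * X k m * X k m)
      = (\<Sum>m<N. w * (X i m * X j m) + (if m = k then (1-w) * (X i k * X j k) else 0))"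
  proof (intro sum.cong refl)
    fix m assume "m \<in> {..<N}"
    then have "X k m * X k m = w + (1-w) * (if k = m then 1 else 0)"
      using gram_entry_sq[OF assms] by (simp add: power2_eq_square)
    then show "X i m * X j m * X k m * X k m = w * (X i m * X j m) + (if m = k then (1-w) * (X i k * X j k) else 0)"
      by (auto simp: algebra_simps)
  qed
  also have "\<dots> = w * (real N / real r) * X i j + (1-w) * (X i k * X j k)"
    using assms by (simp add: sum.distrib sum_distrib_left[symmetric] gram_rows_inner)
  finally show ?thesis .
qed

lemma rank_one_extension:
  assumes "r = 1"
  shows "\<exists>x :: nat \<Rightarrow> real. (\<forall>i<N. x i \<in> {-1, 1}) \<and>
          (\<forall>i<N. \<forall>j<N. X i j = x i * x j) \<and>
          pseudomoment4 N (\<lambda>(i,j) (k,l). x i * x j * x k * x l) \<and>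
          extends4 N (\<lambda>(i,j) (k,l). x i * x j * x k * x l) X"
proof -
  define x where "x = (\<lambda>i. v i 0)"
  have X_eq: "X i j = x i * x j" for i j unfolding gram x_def assms by simp
  have x_sq: "x i * x i = 1" if "i < N" for i
    using unit_norm[OF that] unfolding x_def assms by (simp add: power2_eq_square)
  have x_sign: "x i \<in> {-1, 1}" if "i < N" for i
  proof -
    have "(x i - 1) * (x i + 1) = 0" using x_sq[OF that] by (simp add: algebra_simps)
    then show ?thesis by auto
  qed
  have "pseudomoment4 N (\<lambda>(i,j) (k,l). x i * x j * x k * x l)"
  proof (rule pseudomoment4I)
    fix z :: "nat \<times> nat \<Rightarrow> real"
    have "(\<Sum>i<N. \<Sum>j<N. \<Sum>k<N. \<Sum>l<N. z (i,j) * (x i * x j * x k * x l) * z (k,l))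
        = (\<Sum>i<N. \<Sum>j<N. \<Sum>k<N. \<Sum>l<N. (z (i,j) * (x i * x j)) * (z (k,l) * (x k * x l)))"
      by (simp add: mult_ac)
    also have "\<dots> = (\<Sum>i<N. \<Sum>j<N. z (i,j) * (x i * x j))^2"
      unfolding power2_eq_square sum_distrib_right by (simp only: sum_distrib_left)
    finally show "0 \<le> (\<Sum>i<N. \<Sum>j<N. \<Sum>k<N. \<Sum>l<N. z (i,j) * (x i * x j * x k * x l) * z (k,l))"
      by simp
  qed (use x_sq in \<open>auto simp: mult_ac\<close>)
  moreover have "extends4 N (\<lambda>(i,j) (k,l). x i * x j * x k * x l) X"
    unfolding extends4_def using x_sq[of 0] N_pos by (simp add: X_eq mult.assoc[symmetric])
  ultimately show ?thesis using x_sign X_eq by blast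
qed

end

section \<open>Gerzon's bound\<close>

context etf_gram
begin

text \<open>The matrices \<open>dual_coef a b\<close> express the symmetrised unit matrices \<open>sym_unit a b\<close>
  through the \<open>v\<^sub>m v\<^sub>m\<^sup>T\<close> as well as possible; the total squared error is exactly
  \<open>r(r+1)/2 - N\<close>.\<close>

definition dual_coef :: "nat \<Rightarrow> nat \<Rightarrow> nat \<Rightarrow> real" where
  "dual_coef a b m = (v m a * v m b - w * (if a = b then 1 else 0)) / (1 - w)"

definition sym_unit :: "nat \<Rightarrow> nat \<Rightarrow> nat \<Rightarrow> nat \<Rightarrow> real" where
  "sym_unit a b c d = (if c = a \<and> d = b then 1/2 else 0) + (if c = b \<and> d = a then 1/2 else 0)"

definition dual_image :: "nat \<Rightarrow> nat \<Rightarrow> nat \<Rightarrow> nat \<Rightarrow> real" where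
  "dual_image a b c d = (\<Sum>m<N. dual_coef a b m * v m c * v m d)"

lemma sum_sym_unit:
  assumes "a < r" "b < r"
  shows "(\<Sum>c<r. \<Sum>d<r. g c d * sym_unit a b c d) = (g a b + g b a) / 2"
proof -
  have "g c d * sym_unit a b c d
      = (if d = b then (if c = a then g c d / 2 else 0) else 0)
        + (if d = a then (if c = b then g c d / 2 else 0) else 0)" for c d
    unfolding sym_unit_def by auto
  then show ?thesis using assms by (simp add: sum.distrib add_divide_distrib)
qed

lemma sum_dual_coef:
  assumes "r \<ge> 2" "a < r" "b < r"
  shows "(\<Sum>m<N. dual_coef a b m) = (if a = b then 1 else 0)"
proof -
  have "(\<Sum>m<N. dual_coef a b m)
      = ((\<Sum>m<N. v m a * v m b) - N * w * (if a = b then 1 else 0)) / (1 - w)"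
    unfolding dual_coef_def by (simp add: sum_divide_distrib[symmetric] sum_subtractf)
  also have "\<dots> = (if a = b then 1 else 0) * ((N / r - N * w) / (1 - w))"
    using assms by (simp add: tight)
  also have "N / r - N * w = 1 - w" using welch_identity by (simp add: algebra_simps)
  finally show ?thesis using w_less_one[OF assms(1)] by simp
qed

lemma gerzon_defect_entry:
  assumes r2: "r \<ge> 2" and ab: "a < r" "b < r"
  shows "(if a = b then 1 else 1/2) - (\<Sum>m<N. dual_coef a b m * (v m a * v m b))
    = (\<Sum>c<r. \<Sum>d<r. (dual_image a b c d - sym_unit a b c d)^2)"
proof -
  let ?q = "\<Sum>m<N. dual_coef a b m * (v m a * v m b)"
  have w1: "w < 1" using w_less_one[OF r2] .
  have PP: "(\<Sum>c<r. \<Sum>d<r. (dual_image a b c d)^2) = ?q"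
  proof -
    have v_prod: "v m a * v m b = (1 - w) * dual_coef a b m + w * (if a = b then 1 else 0)" for m
      unfolding dual_coef_def using w1 by simp
    have "(\<Sum>c<r. \<Sum>d<r. (dual_image a b c d)^2)
        = w * (if a = b then 1 else 0) + (1 - w) * (\<Sum>m<N. (dual_coef a b m)^2)"
      unfolding dual_image_def frame_combination_norm sum_dual_coef[OF r2 ab] by simp
    also have "\<dots> = (1 - w) * (\<Sum>m<N. (dual_coef a b m)^2)
        + w * (if a = b then 1 else 0) * (\<Sum>m<N. dual_coef a b m)"
      unfolding sum_dual_coef[OF r2 ab] by simp
    also have "\<dots> = (\<Sum>m<N. (1 - w) * (dual_coef a b m)^2 + w * (if a = b then 1 else 0) * dual_coef a b m)"
      by (simp add: sum.distrib sum_distrib_left)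
    also have "\<dots> = ?q"
      unfolding v_prod by (intro sum.cong refl) (simp add: algebra_simps power2_eq_square)
    finally show ?thesis .
  qed
  have PF: "(\<Sum>c<r. \<Sum>d<r. dual_image a b c d * sym_unit a b c d) = ?q"
    unfolding sum_sym_unit[OF ab] dual_image_def by (simp add: mult_ac)
  have FF: "(\<Sum>c<r. \<Sum>d<r. (sym_unit a b c d)^2) = (if a = b then 1 else 1/2)"
  proof -
    have "(\<Sum>c<r. \<Sum>d<r. (sym_unit a b c d)^2) = (sym_unit a b a b + sym_unit a b b a) / 2"
      unfolding power2_eq_square by (rule sum_sym_unit[OF ab])
    then show ?thesis unfolding sym_unit_def by auto
  qed
  have "(\<Sum>c<r. \<Sum>d<r. (dual_image a b c d - sym_unit a b c d)^2)
      = (\<Sum>c<r. \<Sum>d<r. (dual_image a b c d)^2) - 2 * (\<Sum>c<r. \<Sum>d<r. dual_image a b c d * sym_unit a b c d)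
        + (\<Sum>c<r. \<Sum>d<r. (sym_unit a b c d)^2)"
    by (simp add: power2_diff sum.distrib sum_subtractf sum_distrib_left mult.assoc)
  then show ?thesis using PP PF FF by simp
qed

lemma sum_dual_coef_diag:
  assumes "r \<ge> 2"
  shows "(\<Sum>a<r. \<Sum>b<r. \<Sum>m<N. dual_coef a b m * (v m a * v m b)) = N"
proof -
  have summand: "dual_coef a b m * (v m a * v m b)
      = ((v m a)^2 * (v m b)^2 - w * (if a = b then (v m a)^2 else 0)) / (1 - w)" for a b m
    unfolding dual_coef_def by (simp add: power2_eq_square algebra_simps)
  have quartic: "(\<Sum>a<r. \<Sum>b<r. \<Sum>m<N. (v m a)^2 * (v m b)^2) = N"
  proof -
    have "(\<Sum>a<r. \<Sum>b<r. \<Sum>m<N. (v m a)^2 * (v m b)^2) = (\<Sum>a<r. \<Sum>m<N. \<Sum>b<r. (v m a)^2 * (v m b)^2)"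
      by (rule sum.cong[OF refl], rule sum.swap)
    also have "\<dots> = (\<Sum>m<N. (\<Sum>a<r. (v m a)^2) * (\<Sum>b<r. (v m b)^2))"
      by (subst sum.swap) (simp add: sum_product)
    finally show ?thesis by (simp add: unit_norm)
  qed
  have diag: "(\<Sum>a<r. \<Sum>b<r. \<Sum>m<N. (if a = b then (v m a)^2 else 0)) = N"
  proof -
    have "(\<Sum>a<r. \<Sum>b<r. \<Sum>m<N. (if a = b then (v m a)^2 else 0)) = (\<Sum>a<r. \<Sum>m<N. v m a * v m a)"
    proof (rule sum.cong[OF refl])
      fix a assume "a \<in> {..<r}"
      moreover have "(\<Sum>b<r. \<Sum>m<N. (if a = b then (v m a)^2 else 0))
          = (\<Sum>b<r. if a = b then (\<Sum>m<N. (v m a)^2) else 0)"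
        by (rule sum.cong[OF refl]) auto
      ultimately show "(\<Sum>b<r. \<Sum>m<N. (if a = b then (v m a)^2 else 0)) = (\<Sum>m<N. v m a * v m a)"
        by (simp add: power2_eq_square)
    qed
    also have "\<dots> = (\<Sum>a<r. real N / real r)" by (intro sum.cong refl) (simp add: tight)
    finally show ?thesis using assms by simp
  qed
  have "(\<Sum>a<r. \<Sum>b<r. \<Sum>m<N. dual_coef a b m * (v m a * v m b))
      = ((\<Sum>a<r. \<Sum>b<r. \<Sum>m<N. (v m a)^2 * (v m b)^2)
         - w * (\<Sum>a<r. \<Sum>b<r. \<Sum>m<N. (if a = b then (v m a)^2 else 0))) / (1 - w)"
    unfolding summand by (simp add: sum_divide_distrib[symmetric] sum_subtractf sum_distrib_left)
  also have "\<dots> = N" unfolding quartic diag using w_less_one[OF assms] by (simp add: field_simps)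
  finally show ?thesis .
qed

lemma gerzon_defect:
  assumes "r \<ge> 2"
  shows "real r * (real r + 1) / 2 - N
    = (\<Sum>a<r. \<Sum>b<r. \<Sum>c<r. \<Sum>d<r. (dual_image a b c d - sym_unit a b c d)^2)"
proof -
  have "(if a = b then 1 else 1/2 :: real) = 1/2 + (if a = b then 1/2 else 0)" for a b :: nat
    by simp
  then have "(\<Sum>a<r. \<Sum>b<r. (if a = b then 1 else 1/2 :: real)) = (\<Sum>a<r. real r / 2 + 1/2)"
    by (simp add: sum.distrib)
  also have "\<dots> = real r * (real r + 1) / 2" by (simp add: field_simps)
  finally have "real r * (real r + 1) / 2 - N
      = (\<Sum>a<r. \<Sum>b<r. (if a = b then 1 else 1/2)) - (\<Sum>a<r. \<Sum>b<r. \<Sum>m<N. dual_coef a b m * (v m a * v m b))"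
    using sum_dual_coef_diag[OF assms] by simp
  also have "\<dots> = (\<Sum>a<r. \<Sum>b<r. \<Sum>c<r. \<Sum>d<r. (dual_image a b c d - sym_unit a b c d)^2)"
    by (simp add: sum_subtractf[symmetric] gerzon_defect_entry[OF assms])
  finally show ?thesis .
qed

lemma gerzon_bound:
  assumes "r \<ge> 2"
  shows "real N \<le> real r * (real r + 1) / 2"
proof -
  have "0 \<le> (\<Sum>a<r. \<Sum>b<r. \<Sum>c<r. \<Sum>d<r. (dual_image a b c d - sym_unit a b c d)^2)"
    by (intro sum_nonneg) simp
  then show ?thesis using gerzon_defect[OF assms] by linarith
qed

lemma gerzon_equality_rigid:
  assumes r2: "r \<ge> 2" and eq: "real N = real r * (real r + 1) / 2"
    and S_sym: "\<And>a b. S a b = S b a"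
    and S_frame: "\<And>m. m < N \<Longrightarrow> (\<Sum>c<r. \<Sum>d<r. S c d * v m c * v m d) = 0"
    and ab: "a < r" "b < r"
  shows "S a b = 0"
proof -
  have "(\<Sum>a<r. \<Sum>b<r. \<Sum>c<r. \<Sum>d<r. (dual_image a b c d - sym_unit a b c d)^2) = 0"
    using gerzon_defect[OF r2] eq by simp
  then have "(\<Sum>c<r. \<Sum>d<r. (dual_image a b c d - sym_unit a b c d)^2) = 0"
    by (rule sum2_nonneg_eq_0[rotated 3]) (use ab in \<open>auto intro!: sum_nonneg\<close>)
  then have image_eq: "dual_image a b c d = sym_unit a b c d" if "c < r" "d < r" for c d
    using sum2_nonneg_eq_0[of "{..<r}" "{..<r}" "\<lambda>c d. (dual_image a b c d - sym_unit a b c d)^2" c d] that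
    by simp
  have "S a b = (S a b + S b a) / 2" using S_sym[of a b] by simp
  also have "\<dots> = (\<Sum>c<r. \<Sum>d<r. S c d * sym_unit a b c d)" by (rule sum_sym_unit[OF ab, symmetric])
  also have "\<dots> = (\<Sum>c<r. \<Sum>d<r. S c d * dual_image a b c d)"
    by (intro sum.cong refl) (simp add: image_eq)
  also have "\<dots> = (\<Sum>m<N. dual_coef a b m * (\<Sum>c<r. \<Sum>d<r. S c d * v m c * v m d))"
    unfolding dual_image_def by (simp add: sum_distrib_left sum.swap[where B="{..<N}"] mult_ac)
  also have "\<dots> = 0" using S_frame by simp
  finally show ?thesis .
qed

end

section \<open>Perturbations of the Gram matrix inside the elliptope\<close>

context etf_gram
begin

text \<open>\<open>kernel_vec j = e\<^sub>j - (r/N) X e\<^sub>j\<close> lies in the kernel of \<open>X\<close> because \<open>X\<^sup>2 = (N/r) X\<close>.\<close>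

definition kernel_vec :: "nat \<Rightarrow> nat \<Rightarrow> real" where
  "kernel_vec j k = (if k = j then 1 else 0) - real r / real N * X k j"

lemma sum_kernel_vec:
  assumes "j < N"
  shows "(\<Sum>k<N. f k * kernel_vec j k) = f j - real r / real N * (\<Sum>k<N. f k * X k j)"
proof -
  have "f k * kernel_vec j k = (if k = j then f k else 0) - real r / real N * (f k * X k j)" for k
    unfolding kernel_vec_def by (simp add: algebra_simps)
  then show ?thesis using assms by (simp add: sum_subtractf sum_distrib_left)
qed

lemma gram_kernel_vec: "j < N \<Longrightarrow> (\<Sum>k<N. X i k * kernel_vec j k) = 0"
  using sum_kernel_vec[of j "X i"] gram_square[of i j] N_pos r_pos by simp

lemma gram_form_kernel_vec: "j < N \<Longrightarrow> (\<Sum>i<N. \<Sum>k<N. kernel_vec j i * X i k * kernel_vec j k) = 0"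
  using gram_kernel_vec by (simp add: mult.assoc sum_distrib_left[symmetric])

lemma kernel_vec_annihilated_imp_eigen:
  assumes "j < N" "(\<Sum>k<N. f k * kernel_vec j k) = 0"
  shows "(\<Sum>k<N. f k * X k j) = real N / real r * f j"
  using assms sum_kernel_vec[of j f] N_pos r_pos by (simp add: field_simps)

text \<open>A perturbation \<open>A\<close> of \<open>X\<close> inside the elliptope vanishes on the kernel of \<open>X\<close>,
  because \<open>X + t A\<close> and \<open>X - t A\<close> are both positive semidefinite.\<close>

lemma pert_E2_eigen:
  assumes A: "A \<in> pert_E2 N X" and ij: "i < N" "j < N"
  shows "(\<Sum>k<N. A i k * X k j) = real N / real r * A i j"
proof -
  from A obtain \<epsilon> where "\<epsilon> > 0"
    and E: "\<And>t. 0 < t \<Longrightarrow> t < \<epsilon> \<Longrightarrow> E2 N (\<lambda>i j. X i j + t * A i j) \<and> E2 N (\<lambda>i j. X i j - t * A i j)"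
    unfolding pert_E2_def by blast
  define t where "t = \<epsilon> / 2"
  have t: "0 < t" "t < \<epsilon>" using \<open>\<epsilon> > 0\<close> unfolding t_def by auto
  define z where "z = kernel_vec j"
  define a where "a = (\<Sum>p<N. \<Sum>q<N. z p * A p q * z q)"
  have form: "(\<Sum>p<N. \<Sum>q<N. z p * (X p q + s * A p q) * z q) = s * a" for s
    using gram_form_kernel_vec[OF ij(2)] unfolding z_def a_def
    by (simp add: algebra_simps sum.distrib sum_distrib_left)
  have psd: "psd_on {..<N} (\<lambda>p q. X p q + s * A p q)" if "s = t \<or> s = -t" for s
    using E[OF t] that unfolding E2_def by auto
  have nonneg: "0 \<le> s * a" if "s = t \<or> s = -t" for s
  proof -
    have "0 \<le> (\<Sum>p<N. \<Sum>q<N. z p * (X p q + s * A p q) * z q)"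
      using psd[OF that] unfolding psd_on_def by blast
    then show ?thesis unfolding form .
  qed
  have "0 \<le> t * a" "0 \<le> - t * a" using nonneg[of t] nonneg[of "-t"] by auto
  then have "a = 0" using t by (simp add: zero_le_mult_iff mult_le_0_iff)
  then have "(\<Sum>k<N. (X i k + t * A i k) * z k) = 0"
    using psd_on_form_zero_imp_kernel[OF _ psd[of t], of z i] form[of t] ij by simp
  then have "(\<Sum>k<N. X i k * z k) + t * (\<Sum>k<N. A i k * z k) = 0"
    by (simp add: algebra_simps sum.distrib sum_distrib_left)
  then have "(\<Sum>k<N. A i k * z k) = 0"
    using gram_kernel_vec[OF ij(2)] t unfolding z_def by simp
  then show ?thesis
    using kernel_vec_annihilated_imp_eigen[OF ij(2)] unfolding z_def by blast
qed

lemma pert_E2_diag: "A \<in> pert_E2 N X \<Longrightarrow> i < N \<Longrightarrow> A i i = 0"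
proof -
  assume "A \<in> pert_E2 N X" "i < N"
  then obtain \<epsilon> where "\<epsilon> > 0"
    and E: "\<And>t. 0 < t \<Longrightarrow> t < \<epsilon> \<Longrightarrow> E2 N (\<lambda>i j. X i j + t * A i j)"
    unfolding pert_E2_def by blast
  then have "E2 N (\<lambda>i j. X i j + \<epsilon> / 2 * A i j)" using E[of "\<epsilon> / 2"] by simp
  then show ?thesis using gram_diag[OF \<open>i < N\<close>] \<open>i < N\<close> \<open>\<epsilon> > 0\<close> unfolding E2_def by auto
qed

lemma pert_E2_sym: "A \<in> pert_E2 N X \<Longrightarrow> i < N \<Longrightarrow> j < N \<Longrightarrow> A i j = A j i"
  unfolding pert_E2_def sym_on_def by blast

lemma gram_conj_eigen:
  assumes sym: "\<And>k j. k < N \<Longrightarrow> j < N \<Longrightarrow> D k j = D j k"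
    and eigen: "\<And>k j. k < N \<Longrightarrow> j < N \<Longrightarrow> (\<Sum>q<N. D k q * X q j) = real N / real r * D k j"
    and kj: "k < N" "j < N"
  shows "(\<Sum>q<N. \<Sum>p<N. X k q * D q p * X p j) = (real N / real r)^2 * D k j"
proof -
  have "(\<Sum>q<N. \<Sum>p<N. X k q * D q p * X p j) = (\<Sum>q<N. X k q * (\<Sum>p<N. D q p * X p j))"
    by (simp add: sum_distrib_left mult.assoc)
  also have "\<dots> = (\<Sum>q<N. X k q * (real N / real r * D q j))"
    using kj by (intro sum.cong refl) (simp add: eigen)
  also have "\<dots> = real N / real r * (\<Sum>q<N. D j q * X q k)"
    using kj by (simp add: sum_distrib_left sym gram_sym[of k] mult_ac)
  also have "\<dots> = (real N / real r)^2 * D k j"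
    using eigen[OF kj(2,1)] sym[OF kj] by (simp add: power2_eq_square)
  finally show ?thesis .
qed

lemma gram_conj_frame:
  "(\<Sum>q<N. \<Sum>p<N. X k q * D q p * X p j)
    = (\<Sum>a<r. \<Sum>b<r. (\<Sum>q<N. \<Sum>p<N. v q a * D q p * v p b) * v k a * v j b)"
proof -
  have "(\<Sum>q<N. \<Sum>p<N. X k q * D q p * X p j)
      = (\<Sum>q<N. \<Sum>p<N. \<Sum>a<r. \<Sum>b<r. v k a * v j b * (v q a * D q p * v p b))"
    unfolding gram by (simp add: sum_distrib_left sum_distrib_right mult_ac)
  also have "\<dots> = (\<Sum>a<r. \<Sum>b<r. \<Sum>q<N. \<Sum>p<N. v k a * v j b * (v q a * D q p * v p b))"
    by (rule sum_swap_double)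
  finally show ?thesis by (simp add: sum_distrib_left sum_distrib_right mult_ac)
qed

lemma pert_E2_gram_conj:
  assumes "A \<in> pert_E2 N X" "i < N" "j < N"
  shows "(\<Sum>k<N. \<Sum>l<N. X i k * A k l * X l j) = (real N / real r)^2 * A i j"
  by (rule gram_conj_eigen) (use assms pert_E2_sym pert_E2_eigen in auto)

lemma pert_E2_gram_orth:
  assumes A: "A \<in> pert_E2 N X"
  shows "(\<Sum>k<N. \<Sum>l<N. X k l * A k l) = 0"
proof -
  have "(\<Sum>k<N. \<Sum>l<N. X k l * A k l) = (\<Sum>k<N. \<Sum>l<N. A k l * X l k)"
    by (intro sum.cong refl) (metis gram_sym mult.commute)
  also have "\<dots> = (\<Sum>k<N. real N / real r * A k k)"
    by (intro sum.cong refl) (simp add: pert_E2_eigen[OF A])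
  also have "\<dots> = 0" by (simp add: pert_E2_diag[OF A])
  finally show ?thesis .
qed

text \<open>For \<open>0 < t < 1/(C+1)\<close> the matrices \<open>X \<plusminus> t A\<close> stay positive semidefinite.\<close>

lemma pert_E2I:
  assumes sym: "\<And>i j. A i j = A j i" and hollow: "\<And>i. i < N \<Longrightarrow> A i i = 0"
    and C: "0 \<le> C" and bound: "\<And>z. \<bar>\<Sum>i<N. \<Sum>j<N. z i * A i j * z j\<bar> \<le> C * (\<Sum>i<N. \<Sum>j<N. z i * X i j * z j)"
  shows "A \<in> pert_E2 N X"
proof -
  define \<epsilon> where "\<epsilon> = 1 / (C + 1)"
  have "\<epsilon> > 0" unfolding \<epsilon>_def using C by simp
  have "E2 N (\<lambda>i j. X i j + s * t * A i j)" if t: "0 < t" "t < \<epsilon>" and s: "\<bar>s\<bar> = 1" for s t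
  proof -
    have tC: "t * C \<le> 1"
    proof -
      have "t * C \<le> \<epsilon> * C" using t C by (intro mult_right_mono) auto
      also have "\<dots> \<le> 1" unfolding \<epsilon>_def using C by (simp add: field_simps)
      finally show ?thesis .
    qed
    have "0 \<le> (\<Sum>i<N. \<Sum>j<N. z i * (X i j + s * t * A i j) * z j)" for z
    proof -
      define ZX where "ZX = (\<Sum>i<N. \<Sum>j<N. z i * X i j * z j)"
      define ZA where "ZA = (\<Sum>i<N. \<Sum>j<N. z i * A i j * z j)"
      have "(\<Sum>i<N. \<Sum>j<N. z i * (X i j + s * t * A i j) * z j) = ZX + s * t * ZA"
        unfolding ZX_def ZA_def by (simp add: algebra_simps sum.distrib sum_distrib_left)
      moreover have "\<bar>s * t * ZA\<bar> \<le> t * C * ZX"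
        using mult_left_mono[OF bound[of z], of t] s t unfolding ZA_def ZX_def by (simp add: abs_mult)
      moreover have "t * C * ZX \<le> ZX"
        using tC gram_psd[of z] t C unfolding ZX_def by (intro mult_left_le_one_le) auto
      ultimately show ?thesis by linarith
    qed
    moreover have "X i j + s * t * A i j = X j i + s * t * A j i" for i j
      using gram_sym[of i j] sym[of i j] by simp
    ultimately show ?thesis unfolding E2_def sym_on_def psd_on_def
      using hollow gram_diag by auto
  qed
  from this[of _ 1] this[of _ "-1"] have "E2 N (\<lambda>i j. X i j + t * A i j) \<and> E2 N (\<lambda>i j. X i j - t * A i j)"
    if "0 < t" "t < \<epsilon>" for t
    using that by simp
  moreover have "sym_on N A" unfolding sym_on_def using sym by auto
  ultimately show ?thesis unfolding pert_E2_def using \<open>\<epsilon> > 0\<close> by blast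
qed

end

section \<open>No pseudomoment extension at Gerzon's bound\<close>

context etf_gram
begin

text \<open>With \<open>S = V\<^sup>T D V\<close> for the \<open>N \<times> r\<close> frame matrix \<open>V\<close>, \<open>V S V\<^sup>T = X D X = (N/r)\<^sup>2 D\<close>;
  so the forms \<open>v\<^sub>m\<^sup>T S v\<^sub>m\<close> are multiples of \<open>D\<^bsub>mm\<^esub> = 0\<close> and Gerzon's equality case gives \<open>S = 0\<close>.\<close>

lemma eigen_hollow_zero_at_gerzon_bound:
  assumes r2: "r \<ge> 2" and eq: "real N = real r * (real r + 1) / 2"
    and sym: "\<And>k j. k < N \<Longrightarrow> j < N \<Longrightarrow> D k j = D j k"
    and hollow: "\<And>k. k < N \<Longrightarrow> D k k = 0"
    and eigen: "\<And>k j. k < N \<Longrightarrow> j < N \<Longrightarrow> (\<Sum>q<N. D k q * X q j) = real N / real r * D k j"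
    and kj: "k < N" "j < N"
  shows "D k j = 0"
proof -
  define S where "S = (\<lambda>a b. \<Sum>q<N. \<Sum>p<N. v q a * D q p * v p b)"
  have S_sym: "S a b = S b a" for a b
  proof -
    have "S a b = (\<Sum>p<N. \<Sum>q<N. v q a * D q p * v p b)" unfolding S_def by (rule sum.swap)
    also have "\<dots> = S b a" unfolding S_def by (intro sum.cong refl) (simp add: sym mult_ac)
    finally show ?thesis .
  qed
  have S_frame: "(\<Sum>c<r. \<Sum>d<r. S c d * v m c * v m d) = 0" if "m < N" for m
    using gram_conj_frame[of m D m] gram_conj_eigen[OF sym eigen that that] hollow[OF that]
    unfolding S_def by (simp add: mult_ac)
  have "(real N / real r)^2 * D k j = (\<Sum>q<N. \<Sum>p<N. X k q * D q p * X p j)"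
    using gram_conj_eigen[OF sym eigen kj] by simp
  also have "\<dots> = (\<Sum>a<r. \<Sum>b<r. S a b * v k a * v j b)"
    unfolding gram_conj_frame S_def ..
  also have "\<dots> = 0"
    using gerzon_equality_rigid[OF r2 eq S_sym S_frame] by simp
  finally show ?thesis using N_pos r_pos by simp
qed

lemma extension_diag_pair:
  assumes Y: "pseudomoment4 N Y" and ext: "extends4 N Y X" and ijk: "i < N" "j < N" "k < N"
  shows "Y (i,j) (k,k) = X i j"
proof -
  have "\<forall>i<N. \<forall>j<N. \<forall>k<N. \<forall>k'<N. Y (i,j) (k,k) = Y (i,j) (k',k')"
    using Y unfolding pseudomoment4_def by blast
  moreover have "0 < N" using N_pos by simp
  ultimately have "Y (i,j) (k,k) = Y (i,j) (0,0)" using ijk by blast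
  also have "\<dots> = Y (0,i) (0,j)" using pseudomoment4_rotate[OF Y, of i j 0 0] ijk N_pos by auto
  also have "\<dots> = X i j" using ext ijk unfolding extends4_def by auto
  finally show ?thesis .
qed

lemma extension_cross_pair:
  assumes Y: "pseudomoment4 N Y" and ext: "extends4 N Y X" and ijk: "i < N" "j < N" "k < N"
  shows "Y (k,i) (k,j) = X i j"
  using pseudomoment4_rotate[OF Y, of i j k k] extension_diag_pair[OF Y ext ijk] ijk by auto

text \<open>Test the positive semidefinite \<open>Y\<close> against \<open>kernel_vec j\<close> placed in row \<open>k\<close>: the
  form is \<open>kernel_vec\<^sup>T X kernel_vec = 0\<close>, so the vector lies in the kernel of \<open>Y\<close>.\<close>

lemma extension_row_kernel:
  assumes Y: "pseudomoment4 N Y" and ext: "extends4 N Y X"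
    and idx: "s < N" "t < N" "k < N" "j < N"
  shows "(\<Sum>q<N. Y (s,t) (k,q) * kernel_vec j q) = 0"
proof -
  define e where "e = (\<lambda>p::nat \<times> nat. if fst p = k then kernel_vec j (snd p) else 0)"
  have row: "(\<Sum>p\<in>pairs N. f p * e p) = (\<Sum>b<N. f (k,b) * kernel_vec j b)" for f :: "nat \<times> nat \<Rightarrow> real"
  proof -
    have "(\<Sum>p\<in>pairs N. f p * e p) = (\<Sum>a<N. if a = k then (\<Sum>b<N. f (a,b) * kernel_vec j b) else 0)"
      unfolding sum_pairs e_def by (intro sum.cong refl) auto
    then show ?thesis using idx by simp
  qed
  have psd: "psd_on (pairs N) Y" using Y unfolding pseudomoment4_def by blast
  have "(\<Sum>p\<in>pairs N. \<Sum>q\<in>pairs N. e p * Y p q * e q) = (\<Sum>p\<in>pairs N. (\<Sum>q\<in>pairs N. Y p q * e q) * e p)"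
    by (simp add: sum_distrib_left sum_distrib_right mult_ac)
  also have "\<dots> = (\<Sum>a<N. (\<Sum>b<N. Y (k,a) (k,b) * kernel_vec j b) * kernel_vec j a)"
    unfolding row ..
  also have "\<dots> = (\<Sum>a<N. (\<Sum>b<N. X a b * kernel_vec j b) * kernel_vec j a)"
    using idx by (intro sum.cong refl) (simp add: extension_cross_pair[OF Y ext])
  also have "\<dots> = 0"
    using gram_form_kernel_vec[OF idx(4)] by (simp add: sum_distrib_left sum_distrib_right mult_ac)
  finally have "(\<Sum>q\<in>pairs N. Y (s,t) q * e q) = 0"
    using psd_on_form_zero_imp_kernel[OF _ psd, of e "(s,t)"] idx by (simp add: pairs_def)
  then show ?thesis unfolding row .
qed

lemma extension_factorizes_at_gerzon_bound:
  assumes r2: "r \<ge> 2" and eq: "real N = real r * (real r + 1) / 2"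
    and Y: "pseudomoment4 N Y" and ext: "extends4 N Y X"
    and idx: "s < N" "t < N" "k < N" "j < N"
  shows "Y (s,t) (k,j) = X s t * X k j"
proof -
  define D where "D = (\<lambda>k j. Y (s,t) (k,j) - X s t * X k j)"
  have "D k j = 0"
  proof (rule eigen_hollow_zero_at_gerzon_bound[OF r2 eq _ _ _ idx(3,4)])
    show "D k j = D j k" if "k < N" "j < N" for k j
      unfolding D_def using pseudomoment4_swap_right[OF Y idx(1,2) that] gram_sym[of k j] by simp
    show "D k k = 0" if "k < N" for k
      unfolding D_def using extension_diag_pair[OF Y ext] idx that gram_diag by simp
    show "(\<Sum>q<N. D k q * X q j) = real N / real r * D k j" if "k < N" "j < N" for k j
    proof -
      have "(\<Sum>q<N. Y (s,t) (k,q) * X q j) = real N / real r * Y (s,t) (k,j)"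
        by (rule kernel_vec_annihilated_imp_eigen[OF that(2) extension_row_kernel[OF Y ext idx(1,2) that]])
      moreover have "(\<Sum>q<N. D k q * X q j)
          = (\<Sum>q<N. Y (s,t) (k,q) * X q j) - X s t * (\<Sum>q<N. X k q * X q j)"
        unfolding D_def by (simp add: left_diff_distrib sum_subtractf sum_distrib_left mult.assoc)
      ultimately show ?thesis
        unfolding D_def gram_square by (simp add: algebra_simps)
    qed
  qed
  then show ?thesis unfolding D_def by simp
qed

lemma no_extension_at_gerzon_bound:
  assumes r2: "r \<ge> 2" and eq: "real N = real r * (real r + 1) / 2"
    and Y: "pseudomoment4 N Y" and ext: "extends4 N Y X"
  shows False
proof -
  have N2: "N \<ge> 2" using N_ge_2[OF r2] .
  have "Y (0,1) (0,1) = X 0 1 * X 0 1"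
    using extension_factorizes_at_gerzon_bound[OF r2 eq Y ext] N2 by simp
  moreover have "Y (0,1) (0,1) = 1" using ext N2 gram_diag unfolding extends4_def by simp
  moreover have "(X 0 1)^2 = w" using off_diag_sq[of 0 1] N2 by simp
  ultimately show False using w_less_one[OF r2] by (simp add: power2_eq_square)
qed

end

section \<open>The pseudomoment matrix below Gerzon's bound\<close>

locale etf_moment = etf_gram +
  fixes c :: real
  assumes r_ge_2: "r \<ge> 2"
    and c_def: "c = real r * (real r + 1) / 2 - real N"
    and c_pos: "c > 0"
begin

definition "coef_A = (real r * (real r - 1) / 2) / c"

definition "coef_B = (real r ^ 2 * (1 - 1 / real N)) / c"

definition Y4 :: "nat \<Rightarrow> nat \<Rightarrow> nat \<Rightarrow> nat \<Rightarrow> real" where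
  "Y4 i j k l = coef_A * (X i j * X k l + X i k * X j l + X i l * X j k)
    - coef_B * (\<Sum>m<N. X i m * X j m * X k m * X l m)"

lemma coef_A_nonneg: "0 \<le> coef_A" and coef_B_nonneg: "0 \<le> coef_B"
  unfolding coef_A_def coef_B_def using c_pos r_ge_2 N_pos
  by (auto intro!: divide_nonneg_pos mult_nonneg_nonneg simp: field_simps)

lemma Y4_psd: "0 \<le> (\<Sum>i<N. \<Sum>j<N. \<Sum>k<N. \<Sum>l<N. Z i j * Y4 i j k l * Z k l)"
proof -
  define t where "t = (\<Sum>a<r. frame_sym Z a a)"
  define SS where "SS = (\<Sum>a<r. \<Sum>b<r. (frame_sym Z a b)^2)"
  define T4 where "T4 = (\<Sum>m<N. (\<Sum>a<r. \<Sum>b<r. frame_sym Z a b * v m a * v m b)^2)"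
  have "(\<Sum>i<N. \<Sum>j<N. \<Sum>k<N. \<Sum>l<N. Z i j * Y4 i j k l * Z k l)
      = coef_A * ((\<Sum>i<N. \<Sum>j<N. \<Sum>k<N. \<Sum>l<N. Z i j * (X i j * X k l) * Z k l)
          + (\<Sum>i<N. \<Sum>j<N. \<Sum>k<N. \<Sum>l<N. Z i j * (X i k * X j l + X i l * X j k) * Z k l))
        - coef_B * (\<Sum>i<N. \<Sum>j<N. \<Sum>k<N. \<Sum>l<N. Z i j * (\<Sum>m<N. X i m * X j m * X k m * X l m) * Z k l)"
    unfolding Y4_def by (simp add: algebra_simps sum.distrib sum_subtractf sum_distrib_left)
  also have "\<dots> = coef_A * (t^2 + 2 * SS) - coef_B * T4"
    unfolding quadratic_form_gram_trace quadratic_form_gram_cross quadratic_form_gram_quartic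
      t_def SS_def T4_def ..
  also have "\<dots> \<ge> coef_A * (t^2 + 2 * SS) - coef_B * ((1-w)*(SS - t^2/r) + N*t^2/r^2)"
    using mult_left_mono[OF frame_fourth_moment_bound[OF r_ge_2] coef_B_nonneg]
    unfolding t_def SS_def T4_def by simp
  also have "coef_A * (t^2 + 2 * SS) - coef_B * ((1-w)*(SS - t^2/r) + N*t^2/r^2) = t^2"
    unfolding coef_A_def coef_B_def
    using moment_bound_identity[OF _ _ w_eq[OF r_ge_2] c_def] r_ge_2 N_ge_2[OF r_ge_2] c_pos by simp
  finally show ?thesis by (meson order_trans zero_le_power2)
qed

lemma Y4_diag_pair:
  assumes "i < N" "j < N" "k < N"
  shows "Y4 i j k k = X i j"
proof -
  have coef: "coef_A * 2 = coef_B * (1-w)" "coef_A - coef_B * (w * (real N / real r)) = 1"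
    unfolding coef_A_def coef_B_def
    using moment_coefficient_identities[OF _ _ w_eq[OF r_ge_2] c_def] r_ge_2 N_ge_2[OF r_ge_2] c_pos
    by auto
  have "Y4 i j k k = (coef_A - coef_B * (w * (real N / real r))) * X i j
      + (coef_A * 2 - coef_B * (1-w)) * (X i k * X j k)"
    unfolding Y4_def quartic_sum_repeated[OF assms(3)] using gram_diag[OF assms(3)]
    by (simp add: algebra_simps gram_sym[of k j])
  then show ?thesis using coef by simp
qed

lemma Y4_swap01: "Y4 j i k l = Y4 i j k l"
  unfolding Y4_def by (simp add: gram_sym[of j i] algebra_simps)

lemma Y4_swap12: "Y4 i k j l = Y4 i j k l"
  unfolding Y4_def by (simp add: gram_sym[of k j] algebra_simps)

lemma Y4_swap23: "Y4 i j l k = Y4 i j k l"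
  unfolding Y4_def by (simp add: gram_sym[of l k] algebra_simps)

lemma Y4_swap_pairs: "Y4 k l i j = Y4 i j k l"
  using Y4_swap01[of i k l j] Y4_swap12[of k i l j] Y4_swap12[of i j k l] Y4_swap23[of i k j l]
  by simp

lemma Y4_pseudomoment: "pseudomoment4 N (\<lambda>(i,j) (k,l). Y4 i j k l)"
  by (rule pseudomoment4I) (auto simp: Y4_swap01 Y4_swap12 Y4_swap23 Y4_psd Y4_diag_pair gram_diag)

lemma Y4_extends: "extends4 N (\<lambda>(i,j) (k,l). Y4 i j k l) X"
proof -
  have "Y4 0 i 0 j = Y4 i j 0 0" for i j
    using Y4_swap01[of 0 i 0 j] Y4_swap12[of i 0 0 j] Y4_swap23[of i 0 j 0] Y4_swap12[of i j 0 0] by simp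
  then show ?thesis unfolding extends4_def using Y4_diag_pair N_pos by auto
qed

definition "proj_scale = real N ^ 2 * (1 - 1 / real r) / c"

lemma proj_scale_pos: "proj_scale > 0"
  unfolding proj_scale_def using c_pos r_ge_2 N_pos
  by (intro divide_pos_pos mult_pos_pos) (auto simp: field_simps)

lemma proj_scale_eq: "2 * coef_A * (real N / real r)^2 = proj_scale"
  unfolding proj_scale_def coef_A_def using r_ge_2 c_pos by (simp add: field_simps power2_eq_square)

lemma Y4_pert:
  assumes A: "A \<in> pert_E2 N X" and ij: "i < N" "j < N"
  shows "(\<Sum>k<N. \<Sum>l<N. Y4 i j k l * A k l) = proj_scale * A i j"
proof -
  have cross1: "(\<Sum>k<N. \<Sum>l<N. X i k * X j l * A k l) = (real N / real r)^2 * A i j"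
    using pert_E2_gram_conj[OF A ij] by (simp add: gram_sym[of j] mult_ac)
  have cross2: "(\<Sum>k<N. \<Sum>l<N. X i l * X j k * A k l) = (real N / real r)^2 * A i j"
  proof -
    have "(\<Sum>k<N. \<Sum>l<N. X i l * X j k * A k l) = (\<Sum>k<N. \<Sum>l<N. X j k * A k l * X l i)"
      by (simp add: gram_sym[of i] mult_ac)
    then show ?thesis using pert_E2_gram_conj[OF A ij(2,1)] pert_E2_sym[OF A ij] by simp
  qed
  have quartic: "(\<Sum>k<N. \<Sum>l<N. (\<Sum>m<N. X i m * X j m * X k m * X l m) * A k l) = 0"
  proof -
    have "X i m * X j m * X k m * X l m * A k l = X i m * X j m * (X m k * A k l * X l m)" for k l m
      using gram_sym[of m k] by (simp add: mult_ac)
    then have "(\<Sum>k<N. \<Sum>l<N. (\<Sum>m<N. X i m * X j m * X k m * X l m) * A k l)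
        = (\<Sum>k<N. \<Sum>l<N. \<Sum>m<N. X i m * X j m * (X m k * A k l * X l m))"
      by (simp only: sum_distrib_right)
    also have "\<dots> = (\<Sum>k<N. \<Sum>m<N. \<Sum>l<N. X i m * X j m * (X m k * A k l * X l m))"
      by (rule sum.cong[OF refl], rule sum.swap)
    also have "\<dots> = (\<Sum>m<N. X i m * X j m * (\<Sum>k<N. \<Sum>l<N. X m k * A k l * X l m))"
      by (subst sum.swap) (simp add: sum_distrib_left)
    also have "\<dots> = 0" by (simp add: pert_E2_gram_conj[OF A] pert_E2_diag[OF A])
    finally show ?thesis .
  qed
  have "(\<Sum>k<N. \<Sum>l<N. Y4 i j k l * A k l)
      = coef_A * (X i j * (\<Sum>k<N. \<Sum>l<N. X k l * A k l) + (\<Sum>k<N. \<Sum>l<N. X i k * X j l * A k l)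
          + (\<Sum>k<N. \<Sum>l<N. X i l * X j k * A k l))
        - coef_B * (\<Sum>k<N. \<Sum>l<N. (\<Sum>m<N. X i m * X j m * X k m * X l m) * A k l)"
    unfolding Y4_def by (simp add: algebra_simps sum.distrib sum_subtractf sum_distrib_left)
  also have "\<dots> = 2 * coef_A * (real N / real r)^2 * A i j"
    unfolding pert_E2_gram_orth[OF A] cross1 cross2 quartic by simp
  finally show ?thesis using proj_scale_eq by simp
qed

lemma Y4_form_first_pair:
  "(\<Sum>i<N. \<Sum>j<N. z i * z j * Y4 i j k l)
   = coef_A * ((\<Sum>i<N. \<Sum>j<N. z i * X i j * z j) * X k l + 2 * ((\<Sum>i<N. z i * X i k) * (\<Sum>i<N. z i * X i l)))
     - coef_B * (\<Sum>m<N. (\<Sum>i<N. z i * X i m)^2 * (X k m * X l m))"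
proof -
  define u where "u = (\<lambda>m. \<Sum>i<N. z i * X i m)"
  have t1: "(\<Sum>i<N. \<Sum>j<N. z i * z j * (X i j * X k l)) = (\<Sum>i<N. \<Sum>j<N. z i * X i j * z j) * X k l"
    by (simp add: sum_distrib_right sum_distrib_left mult_ac)
  have t23: "(\<Sum>i<N. \<Sum>j<N. z i * z j * (X i k * X j l)) = u k * u l"
    "(\<Sum>i<N. \<Sum>j<N. z i * z j * (X i l * X j k)) = u l * u k"
    unfolding u_def sum_product by (simp_all add: mult_ac)
  have t4: "(\<Sum>i<N. \<Sum>j<N. z i * z j * (\<Sum>m<N. X i m * X j m * X k m * X l m))
      = (\<Sum>m<N. (u m)^2 * (X k m * X l m))"
  proof -
    have "(\<Sum>i<N. \<Sum>j<N. z i * z j * (\<Sum>m<N. X i m * X j m * X k m * X l m))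
        = (\<Sum>i<N. \<Sum>m<N. \<Sum>j<N. z i * X i m * (z j * X j m) * (X k m * X l m))"
      by (simp add: sum_distrib_left mult_ac) (rule sum.cong[OF refl], rule sum.swap)
    also have "\<dots> = (\<Sum>m<N. \<Sum>i<N. \<Sum>j<N. z i * X i m * (z j * X j m) * (X k m * X l m))"
      by (rule sum.swap)
    also have "\<dots> = (\<Sum>m<N. (u m)^2 * (X k m * X l m))"
      unfolding u_def power2_eq_square sum_product by (simp add: sum_distrib_right)
    finally show ?thesis .
  qed
  have "(\<Sum>i<N. \<Sum>j<N. z i * z j * Y4 i j k l)
      = coef_A * ((\<Sum>i<N. \<Sum>j<N. z i * z j * (X i j * X k l)) + (\<Sum>i<N. \<Sum>j<N. z i * z j * (X i k * X j l))
          + (\<Sum>i<N. \<Sum>j<N. z i * z j * (X i l * X j k)))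
        - coef_B * (\<Sum>i<N. \<Sum>j<N. z i * z j * (\<Sum>m<N. X i m * X j m * X k m * X l m))"
    unfolding Y4_def by (simp add: algebra_simps sum.distrib sum_subtractf sum_distrib_left)
  also have "\<dots> = coef_A * ((\<Sum>i<N. \<Sum>j<N. z i * X i j * z j) * X k l + 2 * (u k * u l))
      - coef_B * (\<Sum>m<N. (u m)^2 * (X k m * X l m))"
    unfolding t1 t23 t4 by (simp add: algebra_simps)
  finally show ?thesis unfolding u_def .
qed

definition "dev_bound = \<bar>coef_A - 1\<bar> + (2 * coef_A + coef_B) * (real N / real r)"

lemma Y4_deviation_bound:
  assumes kl: "k < N" "l < N"
  shows "\<bar>\<Sum>i<N. \<Sum>j<N. z i * z j * (Y4 i j k l - X i j * X k l)\<bar>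
    \<le> dev_bound * (\<Sum>i<N. \<Sum>j<N. z i * X i j * z j)"
proof -
  define ZX where "ZX = (\<Sum>i<N. \<Sum>j<N. z i * X i j * z j)"
  define u where "u = (\<lambda>m. \<Sum>i<N. z i * X i m)"
  define U where "U = (\<Sum>m<N. (u m)^2)"
  have ZX: "0 \<le> ZX" unfolding ZX_def by (rule gram_psd)
  have "(\<Sum>i<N. \<Sum>j<N. z i * z j * (Y4 i j k l - X i j * X k l))
      = (\<Sum>i<N. \<Sum>j<N. z i * z j * Y4 i j k l) - ZX * X k l"
    unfolding ZX_def by (simp add: algebra_simps sum_subtractf sum_distrib_right sum_distrib_left)
  also have "\<dots> = (coef_A - 1) * ZX * X k l + 2 * coef_A * (u k * u l)
      - coef_B * (\<Sum>m<N. (u m)^2 * (X k m * X l m))"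
    unfolding Y4_form_first_pair ZX_def u_def by (simp add: algebra_simps)
  finally have expand: "(\<Sum>i<N. \<Sum>j<N. z i * z j * (Y4 i j k l - X i j * X k l)) = \<dots>" .
  have b1: "\<bar>(coef_A - 1) * ZX * X k l\<bar> \<le> \<bar>coef_A - 1\<bar> * ZX"
    using mult_left_mono[OF gram_abs_le_one[OF kl], of "\<bar>coef_A - 1\<bar> * ZX"] ZX by (simp add: abs_mult)
  have u_le: "(u m)^2 \<le> U" if "m < N" for m
    unfolding U_def using that by (intro member_le_sum) auto
  have b2: "\<bar>u k * u l\<bar> \<le> U"
  proof -
    have "2 * \<bar>u k * u l\<bar> \<le> (u k)^2 + (u l)^2"
      using sum_squares_bound[of "\<bar>u k\<bar>" "\<bar>u l\<bar>"] by (simp add: abs_mult power2_abs)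
    then show ?thesis using u_le[OF kl(1)] u_le[OF kl(2)] by simp
  qed
  have b3: "\<bar>\<Sum>m<N. (u m)^2 * (X k m * X l m)\<bar> \<le> U"
  proof -
    have "\<bar>\<Sum>m<N. (u m)^2 * (X k m * X l m)\<bar> \<le> (\<Sum>m<N. \<bar>(u m)^2 * (X k m * X l m)\<bar>)"
      by (rule sum_abs)
    also have "\<dots> \<le> U"
      unfolding U_def
    proof (rule sum_mono)
      fix m assume "m \<in> {..<N}"
      then have "\<bar>X k m * X l m\<bar> \<le> 1" using gram_abs_le_one kl by (simp add: abs_mult mult_le_one)
      then show "\<bar>(u m)^2 * (X k m * X l m)\<bar> \<le> (u m)^2" by (simp add: abs_mult mult_left_le)
    qed
    finally show ?thesis .
  qed
  have "\<bar>(coef_A - 1) * ZX * X k l + 2 * coef_A * (u k * u l) - coef_B * (\<Sum>m<N. (u m)^2 * (X k m * X l m))\<bar>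
      \<le> \<bar>coef_A - 1\<bar> * ZX + 2 * coef_A * U + coef_B * U"
    using abs_combination_le[OF coef_A_nonneg coef_B_nonneg] b1 b2 b3 coef_A_nonneg coef_B_nonneg
    by (smt (verit) mult_left_mono)
  also have "\<dots> = dev_bound * ZX"
    unfolding dev_bound_def U_def u_def ZX_def gram_image_norm by (simp add: algebra_simps)
  finally show ?thesis unfolding expand ZX_def .
qed

definition proj_matrix :: "nat \<times> nat \<Rightarrow> nat \<times> nat \<Rightarrow> real" where
  "proj_matrix = (\<lambda>(i,j) (k,l). (Y4 i j k l - X i j * X k l) / proj_scale)"

lemma proj_matrix_apply: "proj_matrix (i,j) (k,l) = (Y4 i j k l - X i j * X k l) / proj_scale"
  unfolding proj_matrix_def by simp

lemma proj_matrix_sym: "proj_matrix p q = proj_matrix q p"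
  by (cases p; cases q) (simp add: proj_matrix_apply Y4_swap_pairs mult.commute)

lemma proj_matrix_image_pert: "(\<lambda>i j. \<Sum>q\<in>pairs N. proj_matrix (i,j) q * u q) \<in> pert_E2 N X"
proof -
  define A where "A = (\<lambda>i j. \<Sum>q\<in>pairs N. proj_matrix (i,j) q * u q)"
  have A_eq: "A i j = (\<Sum>k<N. \<Sum>l<N. (Y4 i j k l - X i j * X k l) / proj_scale * u (k,l))" for i j
    unfolding A_def sum_pairs proj_matrix_apply ..
  have "A i i = 0" if "i < N" for i
  proof -
    have "Y4 i i k l - X i i * X k l = 0" if "k < N" "l < N" for k l
      using Y4_swap_pairs[of i i k l] Y4_diag_pair[OF that \<open>i < N\<close>] gram_diag[OF \<open>i < N\<close>] by simp
    then show ?thesis unfolding A_eq by simp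
  qed
  moreover have "A i j = A j i" for i j
    unfolding A_eq by (simp add: Y4_swap01[of j i] gram_sym[of j i])
  moreover have "\<bar>\<Sum>i<N. \<Sum>j<N. z i * A i j * z j\<bar>
      \<le> ((\<Sum>k<N. \<Sum>l<N. \<bar>u (k,l)\<bar>) / proj_scale * dev_bound) * (\<Sum>i<N. \<Sum>j<N. z i * X i j * z j)" for z
  proof -
    let ?G = "\<lambda>k l. \<Sum>i<N. \<Sum>j<N. z i * z j * (Y4 i j k l - X i j * X k l)"
    have "(\<Sum>i<N. \<Sum>j<N. z i * A i j * z j)
        = (\<Sum>i<N. \<Sum>j<N. \<Sum>k<N. \<Sum>l<N. u (k,l) / proj_scale * (z i * z j * (Y4 i j k l - X i j * X k l)))"
      unfolding A_eq by (simp add: sum_distrib_left sum_distrib_right mult_ac)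
    also have "\<dots> = (\<Sum>k<N. \<Sum>l<N. \<Sum>i<N. \<Sum>j<N. u (k,l) / proj_scale * (z i * z j * (Y4 i j k l - X i j * X k l)))"
      by (rule sum_swap_double)
    also have "\<dots> = (\<Sum>k<N. \<Sum>l<N. u (k,l) / proj_scale * ?G k l)"
      by (simp add: sum_distrib_left)
    finally have "\<bar>\<Sum>i<N. \<Sum>j<N. z i * A i j * z j\<bar> \<le> (\<Sum>k<N. \<Sum>l<N. \<bar>u (k,l) / proj_scale * ?G k l\<bar>)"
      by (simp only: order_trans[OF sum_abs sum_mono[OF sum_abs]])
    also have "\<dots> \<le> (\<Sum>k<N. \<Sum>l<N. \<bar>u (k,l)\<bar> / proj_scale * (dev_bound * (\<Sum>i<N. \<Sum>j<N. z i * X i j * z j)))"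
    proof (intro sum_mono)
      fix k l assume "k \<in> {..<N}" "l \<in> {..<N}"
      then have "\<bar>u (k,l)\<bar> / proj_scale * \<bar>?G k l\<bar>
          \<le> \<bar>u (k,l)\<bar> / proj_scale * (dev_bound * (\<Sum>i<N. \<Sum>j<N. z i * X i j * z j))"
        using Y4_deviation_bound proj_scale_pos by (intro mult_left_mono) auto
      then show "\<bar>u (k,l) / proj_scale * ?G k l\<bar>
          \<le> \<bar>u (k,l)\<bar> / proj_scale * (dev_bound * (\<Sum>i<N. \<Sum>j<N. z i * X i j * z j))"
        using proj_scale_pos by (simp add: abs_mult)
    qed
    also have "\<dots> = ((\<Sum>k<N. \<Sum>l<N. \<bar>u (k,l)\<bar>) / proj_scale * dev_bound) * (\<Sum>i<N. \<Sum>j<N. z i * X i j * z j)"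
      by (simp add: sum_distrib_right sum_divide_distrib mult.assoc)
    finally show ?thesis .
  qed
  moreover have "0 \<le> (\<Sum>k<N. \<Sum>l<N. \<bar>u (k,l)\<bar>) / proj_scale * dev_bound"
    unfolding dev_bound_def using proj_scale_pos coef_A_nonneg coef_B_nonneg
    by (intro mult_nonneg_nonneg divide_nonneg_pos sum_nonneg) auto
  ultimately show ?thesis unfolding A_def[symmetric] by (intro pert_E2I) blast+
qed

lemma proj_matrix_orth_proj: "orth_proj N (vec_space N (pert_E2 N X)) proj_matrix"
  unfolding orth_proj_def Let_def
proof (intro allI conjI ballI)
  fix u :: "nat \<times> nat \<Rightarrow> real"
  show "(\<lambda>p. \<Sum>q\<in>pairs N. proj_matrix p q * u q) \<in> vec_space N (pert_E2 N X)"
    unfolding vec_space_def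
    by (intro CollectI bexI[OF _ proj_matrix_image_pert[of u]] ballI) (auto simp: vec_def)
  fix s assume "s \<in> vec_space N (pert_E2 N X)"
  then obtain A where A: "A \<in> pert_E2 N X" and sA: "\<And>p. p \<in> pairs N \<Longrightarrow> s p = vec A p"
    unfolding vec_space_def by blast
  have proj_s: "(\<Sum>p\<in>pairs N. proj_matrix q p * s p) = s q" if q: "q \<in> pairs N" for q
  proof -
    obtain i j where ij: "q = (i,j)" "i < N" "j < N" using q unfolding pairs_def by auto
    have "(\<Sum>p\<in>pairs N. proj_matrix q p * s p) = (\<Sum>k<N. \<Sum>l<N. (Y4 i j k l - X i j * X k l) / proj_scale * A k l)"
      unfolding sum_pairs ij(1) proj_matrix_apply using sA by (simp add: pairs_def vec_def)
    also have "\<dots> = ((\<Sum>k<N. \<Sum>l<N. Y4 i j k l * A k l) - X i j * (\<Sum>k<N. \<Sum>l<N. X k l * A k l)) / proj_scale"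
      by (simp add: algebra_simps sum_subtractf sum_distrib_left sum_divide_distrib diff_divide_distrib)
    also have "\<dots> = A i j" using Y4_pert[OF A ij(2,3)] pert_E2_gram_orth[OF A] proj_scale_pos by simp
    finally show ?thesis using sA q ij by (simp add: vec_def)
  qed
  have "(\<Sum>p\<in>pairs N. (\<Sum>q\<in>pairs N. proj_matrix p q * u q) * s p)
      = (\<Sum>q\<in>pairs N. u q * (\<Sum>p\<in>pairs N. proj_matrix q p * s p))"
  proof -
    have "(\<Sum>p\<in>pairs N. (\<Sum>q\<in>pairs N. proj_matrix p q * u q) * s p)
        = (\<Sum>p\<in>pairs N. \<Sum>q\<in>pairs N. u q * (proj_matrix q p * s p))"
      using proj_matrix_sym by (simp add: sum_distrib_right) (simp add: mult_ac)
    also have "\<dots> = (\<Sum>q\<in>pairs N. \<Sum>p\<in>pairs N. u q * (proj_matrix q p * s p))"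
      by (rule sum.swap)
    finally show ?thesis by (simp add: sum_distrib_left)
  qed
  also have "\<dots> = (\<Sum>q\<in>pairs N. u q * s q)" by (intro sum.cong refl) (simp add: proj_s)
  finally show "(\<Sum>p\<in>pairs N. (u p - (\<Sum>q\<in>pairs N. proj_matrix p q * u q)) * s p) = 0"
    by (simp add: algebra_simps sum_subtractf)
qed

lemma Y4_projection_formula:
  assumes P: "orth_proj N (vec_space N (pert_E2 N X)) P" and pq: "p \<in> pairs N" "q \<in> pairs N"
  shows "(\<lambda>(i,j) (k,l). Y4 i j k l) p q = vec X p * vec X q + proj_scale * P p q"
  using orth_proj_unique[OF P proj_matrix_orth_proj pq] proj_scale_pos
  by (cases p; cases q) (simp add: proj_matrix_apply vec_def)

end

section \<open>Membership in the degree-4 elliptope\<close>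

lemma (in etf_gram) moment_extension:
  assumes "r > 1" and "real N < real r * (real r + 1) / 2"
  shows "let c = real r * (real r + 1) / 2 - real N;
             Y = (\<lambda>(i,j) (k,l).
                   (real r * (real r - 1) / 2) / c * (X i j * X k l + X i k * X j l + X i l * X j k)
                   - (real r ^ 2 * (1 - 1 / real N)) / c *
                       (\<Sum>m<N. X i m * X j m * X k m * X l m))
         in pseudomoment4 N Y \<and> extends4 N Y X \<and>
            (\<forall>P. orth_proj N (vec_space N (pert_E2 N X)) P \<longrightarrow>
               (\<forall>p\<in>pairs N. \<forall>q\<in>pairs N.
                  Y p q = vec X p * vec X q
                          + (real N ^ 2 * (1 - 1 / real r)) / c * P p q))"
proof -
  define c where "c = real r * (real r + 1) / 2 - real N"
  interpret etf_moment N r v w X c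
    by unfold_locales (use assms c_def in auto)
  show ?thesis
    unfolding Let_def c_def[symmetric] Y4_def[symmetric, unfolded coef_A_def coef_B_def]
      proj_scale_def[symmetric]
    using Y4_pseudomoment Y4_extends Y4_projection_formula by blast
qed

lemma (in etf_gram) E4_iff: "E4 N X \<longleftrightarrow> real N < real r * (real r + 1) / 2 \<or> r = 1"
proof
  assume "E4 N X"
  then obtain Y where Y: "pseudomoment4 N Y" "extends4 N Y X" unfolding E4_def by blast
  show "real N < real r * (real r + 1) / 2 \<or> r = 1"
  proof (cases "r = 1")
    case False
    then have "r \<ge> 2" using r_pos by simp
    with Y show ?thesis using no_extension_at_gerzon_bound gerzon_bound by fastforce
  qed simp
next
  assume bound: "real N < real r * (real r + 1) / 2 \<or> r = 1"
  have "\<exists>Y. pseudomoment4 N Y \<and> extends4 N Y X"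
  proof (cases "r = 1")
    case True
    then show ?thesis using rank_one_extension by blast
  next
    case False
    then show ?thesis using moment_extension[unfolded Let_def] bound r_pos by fastforce
  qed
  moreover have "sym_on N X" unfolding sym_on_def using gram_sym by blast
  ultimately show "E4 N X" unfolding E4_def by blast
qed

lemma ETF_imp_etf_gram:
  assumes "N \<ge> 1" "r \<ge> 1" "ETF N r v" "X = Gram r v"
  shows "\<exists>w. etf_gram N r v w X"
proof -
  from assms(3) obtain \<alpha> where untf: "UNTF N r v" and \<alpha>: "\<alpha> \<in> {0..1}"
    and angle: "\<And>i j. i < N \<Longrightarrow> j < N \<Longrightarrow> i \<noteq> j \<Longrightarrow> \<bar>inner_v r v i j\<bar> = \<alpha>"
    unfolding ETF_def by blast
  have "etf_gram N r v (\<alpha>^2) X"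
  proof
    show "(X i j)^2 = \<alpha>^2" if "i < N" "j < N" "i \<noteq> j" for i j
      using angle[OF that] assms(4) unfolding Gram_def by (metis power2_abs)
  qed (use assms untf \<alpha> in \<open>auto simp: UNTF_def Gram_def inner_v_def power_le_one\<close>)
  then show ?thesis ..
qed

theorem theorem4:
  fixes N r :: nat and v :: "nat \<Rightarrow> nat \<Rightarrow> real" and X :: "nat \<Rightarrow> nat \<Rightarrow> real"
  assumes "N \<ge> 1" and "r \<ge> 1"
    and "ETF N r v"
    and "X = Gram r v"
  shows "(E4 N X \<longleftrightarrow> real N < real r * (real r + 1) / 2 \<or> r = 1)
    \<and> (r = 1 \<longrightarrow> (\<exists>x :: nat \<Rightarrow> real. (\<forall>i<N. x i \<in> {-1, 1}) \<and>
          (\<forall>i<N. \<forall>j<N. X i j = x i * x j) \<and>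
          pseudomoment4 N (\<lambda>(i,j) (k,l). x i * x j * x k * x l) \<and>
          extends4 N (\<lambda>(i,j) (k,l). x i * x j * x k * x l) X))
    \<and> (r > 1 \<and> real N < real r * (real r + 1) / 2 \<longrightarrow>
        (let c = real r * (real r + 1) / 2 - real N;
             Y = (\<lambda>(i,j) (k,l).
                   (real r * (real r - 1) / 2) / c * (X i j * X k l + X i k * X j l + X i l * X j k)
                   - (real r ^ 2 * (1 - 1 / real N)) / c *
                       (\<Sum>m<N. X i m * X j m * X k m * X l m))
         in pseudomoment4 N Y \<and> extends4 N Y X \<and>
            (\<forall>P. orth_proj N (vec_space N (pert_E2 N X)) P \<longrightarrow>
               (\<forall>p\<in>pairs N. \<forall>q\<in>pairs N.
                  Y p q = vec X p * vec X q
                          + (real N ^ 2 * (1 - 1 / real r)) / c * P p q))))"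
proof -
  obtain w where "etf_gram N r v w X" using ETF_imp_etf_gram[OF assms] ..
  then interpret etf_gram N r v w X .
  show ?thesis using E4_iff rank_one_extension moment_extension by blast
qed

end
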